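(* Let $d\ge 2$, let $r=\sin\!\left(\frac{2\pi}{(d-1)d^2}\right)$, fix $\alpha\in(0,1)$ and put $$\beta=\frac{r^{\frac{(d-1)d}{2}}\left(\frac{d-1}{2d}\right)^d\frac{2}{d-1}}{\prod_{k=1}^{d-1}(r^k+1)}.$$ Then there is a map $R:\mathbb R^{6d-3}\to\mathcal P_d$ (depending only on $d$ and $\alpha$) with the following property. For every nonzero $p\in\mathcal P_d$ and every $\epsilon\in\mathbb R^{6d-3}$ with $\|\epsilon\|_\infty\le\frac{\alpha(\beta\|p\|)^2}{2d-1}$, the polynomial $\tilde p=R(\widetilde{\mathcal A}(p,\epsilon))$ satisfies $$\rho([p],[\tilde p])\le\left(\frac{2+\sqrt2}{\beta^2(1-\alpha)}\,\frac{d-d\tilde C-1+\tilde C^d}{1-\tilde C}\,\sqrt d+\frac{1-\tilde C^d}{2\beta\sqrt{\frac{1}{\sqrt d}(1-\alpha)}}\right)\frac{d(2d-1)}{1-\tilde C}\,\frac{\|\epsilon\|_\infty}{\|p\|},$$ where $\tilde C=\frac{(1+\sqrt2)(2d-1)\|\epsilon\|_\infty+d\|p\|^2}{(\beta\|p\|)^2(1-\alpha)}$.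
   Context: $\mathcal P_d$ is the space of complex polynomials of degree at most $d-1$, regarded as functions on the unit circle $\mathbb T=\{z\in\mathbb C:|z|=1\}$, with inner product $\langle p,q\rangle=\frac1{2\pi}\int_0^{2\pi}p(e^{it})\overline{q(e^{it})}\,dt$. Thus if $p(z)=\sum_{j=0}^{d-1}c_jz^j$ then $\|p\|=\|p\|_2=(\sum_j|c_j|^2)^{1/2}$. Let $\omega=e^{2\pi i/(2d-1)}$ and $\nu=e^{2\pi i/d}$. The magnitude measurement map $\mathcal A:\mathcal P_d\to\mathbb R^{6d-3}$ is $(\mathcal A(p))_j=|p(\omega^j)|^2$ for $1\le j\le 2d-1$, $(\mathcal A(p))_j=|p(\omega^j)-p(\omega^j\nu)|^2$ for $2d\le j\le 4d-2$, and $(\mathcal A(p))_j=|p(\omega^j)-ip(\omega^j\nu)|^2$ for $4d-1\le j\le 6d-3$. For $\epsilon\in\mathbb R^{6d-3}$ the noisy measurements are $\widetilde{\mathcal A}(p,\epsilon)=\mathcal A(p)+\epsilon$, and $\|\epsilon\|_\infty=\max_j|\epsilon_j|$. For $p\in\mathcal P_d$, $[p]=\{cp:|c|=1\}$, and $\rho([p],[q])=\min_{|c|=1}\|p-cq\|$. *)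

theory Defs
  imports "HOL-Analysis.Analysis" "HOL-Computational_Algebra.Polynomial"
begin

definition Pd :: "nat \<Rightarrow> complex poly set" where
  "Pd d = {p. degree p < d}"

text \<open>L2 norm on the circle = l2 norm of the coefficient vector.\<close>
definition pnorm :: "complex poly \<Rightarrow> real" where
  "pnorm p = sqrt (\<Sum>j\<le>degree p. (cmod (coeff p j))\<^sup>2)"

definition rho :: "complex poly \<Rightarrow> complex poly \<Rightarrow> real" where
  "rho p q = (INF c\<in>{c::complex. cmod c = 1}. pnorm (p - smult c q))"

definition omg :: "nat \<Rightarrow> complex" where
  "omg d = cis (2 * pi / real (2 * d - 1))"

definition nu :: "nat \<Rightarrow> complex" where
  "nu d = cis (2 * pi / real d)"

definition meas :: "nat \<Rightarrow> complex poly \<Rightarrow> nat \<Rightarrow> real" where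
  "meas d p j =
    (if 1 \<le> j \<and> j \<le> 2*d - 1 then (cmod (poly p (omg d ^ j)))\<^sup>2
     else if 2*d \<le> j \<and> j \<le> 4*d - 2 then
       (cmod (poly p (omg d ^ j) - poly p (omg d ^ j * nu d)))\<^sup>2
     else if 4*d - 1 \<le> j \<and> j \<le> 6*d - 3 then
       (cmod (poly p (omg d ^ j) - \<i> * poly p (omg d ^ j * nu d)))\<^sup>2
     else 0)"

definition noisy_meas :: "nat \<Rightarrow> complex poly \<Rightarrow> (nat \<Rightarrow> real) \<Rightarrow> nat \<Rightarrow> real" where
  "noisy_meas d p eps j = (if 1 \<le> j \<and> j \<le> 6*d - 3 then meas d p j + eps j else 0)"

definition sup_norm :: "nat \<Rightarrow> (nat \<Rightarrow> real) \<Rightarrow> real" where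
  "sup_norm d eps = Max ((\<lambda>j. \<bar>eps j\<bar>) ` {1..6*d - 3})"

definition rr :: "nat \<Rightarrow> real" where
  "rr d = sin (2 * pi / (real (d - 1) * real d ^ 2))"

definition beta :: "nat \<Rightarrow> real" where
  "beta d = (rr d powr (real ((d - 1) * d) / 2) * ((real d - 1) / (2 * real d)) ^ d
              * (2 / (real d - 1))) / (\<Prod>k=1..d-1. rr d ^ k + 1)"

end

theory Submission
  imports Defs "HOL-Computational_Algebra.Fundamental_Theorem_Algebra"
begin

text \<open>
  Products \<open>f(z) \<cdot> conj (g(z))\<close> of polynomials of degree \<open>< d\<close> are trigonometric polynomials with
  frequencies in \<open>(-d, d)\<close>, so on the unit circle they are determined by their values at the
  \<open>2d - 1\<close> points \<open>\<omega>\<^sup>l\<close> and can be interpolated with a Dirichlet kernel. The measurements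
  therefore determine, up to the noise, \<open>|p(z)|\<^sup>2\<close> and (by polarization) \<open>p(z) \<cdot> conj (p(z\<nu>))\<close>
  for every unit \<open>z\<close>. Since \<open>p\<close> has fewer than \<open>2d - 1\<close> roots and the \<open>2d - 1\<close> orbits
  \<open>{\<omega>\<^sup>j \<nu>\<^sup>k | k < d}\<close> are disjoint and separated, some orbit keeps away from every root
  direction; factoring \<open>p\<close> then shows \<open>|p| \<ge> 2\<beta>\<parallel>p\<parallel>\<close> on it. The reconstruction picks the
  orbit with the largest estimated minimum of \<open>|p|\<^sup>2\<close>, takes moduli from square roots of the
  estimates, propagates the phase along the orbit using \<open>p(z) \<cdot> conj (p(z\<nu>))\<close>, and reads off
  the coefficients by a discrete Fourier transform over the orbit. The lower bound on \<open>|p|\<close>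
  turns the noise into an error of order \<open>\<parallel>\<epsilon>\<parallel>\<^sub>\<infinity> / (\<beta>\<^sup>2 \<parallel>p\<parallel>)\<close> at each step, and this accumulated
  error is dominated by the bound of the theorem.
\<close>

section \<open>Polynomials on the unit circle\<close>

lemma sum_cis_roots_of_unity:
  fixes n :: nat and k :: int
  assumes "n > 0"
  shows "(\<Sum>l<n. cis (2 * pi * real l * of_int k / real n)) = (if int n dvd k then of_nat n else 0)"
proof (cases "int n dvd k")
  case True
  then obtain q where q: "k = int n * q" by auto
  have "cis (2 * pi * real l * of_int k / real n) = 1" for l
  proof -
    have "2 * pi * real l * of_int k / real n = 2 * pi * of_int (int l * q)"
      using assms by (simp add: q field_simps)
    then show ?thesis by (simp add: cis_multiple_2pi)
  qed
  then show ?thesis using True by simp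
next
  case False
  define w where "w = cis (2 * pi * of_int k / real n)"
  have pw: "cis (2 * pi * real l * of_int k / real n) = w ^ l" for l
    unfolding w_def Complex.DeMoivre by (rule arg_cong[where f=cis]) (simp add: field_simps)
  have "w \<noteq> 1"
  proof
    assume "w = 1"
    then have "Re w = 1" by simp
    then have "cos (2 * pi * of_int k / real n) = 1" unfolding w_def by simp
    then obtain x :: int where "2 * pi * of_int k / real n = of_int x * 2 * pi"
      unfolding cos_one_2pi_int by blast
    then have "of_int k = real n * of_int x" using assms by (simp add: field_simps)
    then have "k = int n * x" by (metis of_int_eq_iff of_int_mult of_int_of_nat_eq)
    then show False using False by auto
  qed
  moreover have "w ^ n = 1"
    unfolding w_def Complex.DeMoivre using assms by (simp add: cis_multiple_2pi)
  ultimately show ?thesis using False pw geometric_sum[of w n] by simp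
qed

lemma sum_coeff_upto_degree:
  fixes p :: "'a::zero poly"
  assumes "degree p < n" and "\<And>i. f i 0 = 0"
  shows "(\<Sum>i\<le>degree p. f i (coeff p i)) = (\<Sum>i<n. f i (coeff p i))"
  by (rule sum.mono_neutral_left) (use assms in \<open>auto simp: coeff_eq_0\<close>)

lemma poly_eq_sum_lessThan:
  fixes p :: "'a::{comm_semiring_0,semiring_1} poly"
  assumes "degree p < n"
  shows "poly p x = (\<Sum>i<n. coeff p i * x ^ i)"
  unfolding poly_altdef by (rule sum_coeff_upto_degree[OF assms]) simp

lemma poly_cis:
  assumes "degree f < d"
  shows "poly f (cis t) = (\<Sum>a<d. coeff f a * cis (real a * t))"
  using poly_eq_sum_lessThan[OF assms] by (simp add: Complex.DeMoivre)

lemma cnj_poly_cis: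
  assumes "degree f < d"
  shows "cnj (poly f (cis t)) = (\<Sum>a<d. cnj (coeff f a) * cis (- (real a * t)))"
  using poly_cis[OF assms, of t] by (simp add: cis_cnj)

lemma pnorm_eq_sum_lessThan:
  assumes "degree p < n"
  shows "pnorm p = sqrt (\<Sum>i<n. (cmod (coeff p i))\<^sup>2)"
  unfolding pnorm_def by (subst sum_coeff_upto_degree[OF assms]) simp_all

lemma norm_coeff_le_pnorm: "cmod (coeff p i) \<le> pnorm p"
proof -
  have n: "degree p < max (degree p) i + 1" by simp
  have "(cmod (coeff p i))\<^sup>2 \<le> (\<Sum>j<max (degree p) i + 1. (cmod (coeff p j))\<^sup>2)"
    by (rule member_le_sum) auto
  then show ?thesis
    unfolding pnorm_eq_sum_lessThan[OF n] by (metis abs_norm_cancel real_sqrt_abs real_sqrt_le_mono)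
qed

lemma pnorm_nonneg: "pnorm p \<ge> 0"
  unfolding pnorm_def by (simp add: sum_nonneg)

lemma pnorm_pos: "p \<noteq> 0 \<Longrightarrow> pnorm p > 0"
  using norm_coeff_le_pnorm[of p "degree p"] by (metis leading_coeff_0_iff order_less_le_trans zero_less_norm_iff)

lemma pnorm_smult: "pnorm (smult a q) = cmod a * pnorm q"
proof -
  have ds: "degree (smult a q) < degree q + 1" using degree_smult_le[of a q] by simp
  have dq: "degree q < degree q + 1" by simp
  show ?thesis unfolding pnorm_eq_sum_lessThan[OF dq] pnorm_eq_sum_lessThan[OF ds]
    by (simp add: norm_mult power_mult_distrib sum_distrib_left[symmetric] real_sqrt_mult)
qed

lemma pnorm_minus_commute: "pnorm (p - q) = pnorm (q - p)"
proof -
  define n where "n = max (degree p) (degree q) + 1"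
  have "degree (p - q) < n" "degree (q - p) < n"
    using degree_diff_le_max[of p q] degree_diff_le_max[of q p] by (simp_all add: n_def)
  then show ?thesis by (simp add: pnorm_eq_sum_lessThan norm_minus_commute)
qed

lemma rho_le_pnorm: "cmod c = 1 \<Longrightarrow> rho p q \<le> pnorm (p - smult c q)"
  unfolding rho_def by (rule cINF_lower) (auto intro!: bdd_belowI[of _ 0] simp: pnorm_nonneg)

lemma norm_poly_le_on_circle:
  assumes "degree p < d" "cmod z = 1"
  shows "cmod (poly p z) \<le> real d * pnorm p"
proof -
  have "cmod (poly p z) \<le> (\<Sum>i<d. cmod (coeff p i * z ^ i))"
    unfolding poly_eq_sum_lessThan[OF assms(1)] by (rule norm_sum)
  also have "\<dots> \<le> (\<Sum>i<d. pnorm p)"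
    using assms(2) by (intro sum_mono) (simp add: norm_mult norm_power norm_coeff_le_pnorm)
  finally show ?thesis by simp
qed

lemma norm_one_imp_cis:
  assumes "cmod z = 1"
  obtains t where "z = cis t"
proof -
  have "z \<noteq> 0" using assms by auto
  then have "cis (Arg z) = sgn z" by (rule cis_Arg)
  also have "sgn z = z" using assms by (simp add: sgn_div_norm)
  finally show ?thesis using that by metis
qed

lemma sgn_cnj: "sgn (cnj z) = cnj (sgn z)"
  by (simp add: Complex.sgn_eq)

lemma sgn_mult_cnj_sgn: "z \<noteq> 0 \<Longrightarrow> sgn z * cnj (sgn z) = 1"
  by (simp add: complex_norm_square[symmetric] norm_sgn)

lemma omg_power: "omg d ^ l = cis (2*pi*real l/real (2*d-1))"
  unfolding omg_def Complex.DeMoivre by (rule arg_cong[where f=cis]) simp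

lemma nu_power: "nu d ^ l = cis (2*pi*real l/real d)"
  unfolding nu_def Complex.DeMoivre by (rule arg_cong[where f=cis]) simp

lemma norm_omg [simp]: "cmod (omg d) = 1"
  by (simp add: omg_def)

lemma norm_nu [simp]: "cmod (nu d) = 1"
  by (simp add: nu_def)

lemma omg_power_period: "d \<ge> 1 \<Longrightarrow> omg d ^ (m * (2*d-1) + l) = omg d ^ l"
  by (simp add: power_add mult.commute[of m] power_mult omg_power)

lemma sum_omg_power_atLeast1:
  fixes h :: "complex \<Rightarrow> 'a::ab_group_add"
  assumes "d \<ge> 1"
  shows "(\<Sum>l\<in>{1..2*d-1}. h (omg d ^ l)) = (\<Sum>l<2*d-1. h (omg d ^ l))"
proof -
  have "h (omg d ^ (2*d-1)) = h (omg d ^ 0)"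
    using omg_power_period[OF assms, of 1 0] by simp
  then have "h (omg d ^ 0) + (\<Sum>l<2*d-1. h (omg d ^ Suc l)) = h (omg d ^ 0) + (\<Sum>l<2*d-1. h (omg d ^ l))"
    using sum.lessThan_Suc_shift[of "\<lambda>l. h (omg d ^ l)" "2*d-1"] by (simp only: sum.lessThan_Suc add.commute)
  then have "(\<Sum>l<2*d-1. h (omg d ^ Suc l)) = (\<Sum>l<2*d-1. h (omg d ^ l))"
    by (rule add_left_imp_eq)
  moreover have "(\<Sum>l\<in>{1..2*d-1}. h (omg d ^ l)) = (\<Sum>l<2*d-1. h (omg d ^ Suc l))"
    by (simp only: One_nat_def sum.atLeast1_atMost_eq)
  ultimately show ?thesis by simp
qed


section \<open>Interpolation with the Dirichlet kernel\<close>

lemma int_dvd_diff_imp_eq: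
  fixes a b n :: nat
  assumes "a < n" "b < n" "int n dvd int a - int b"
  shows "a = b"
proof (rule ccontr)
  assume "a \<noteq> b"
  then have "int n \<le> \<bar>int a - int b\<bar>" using dvd_imp_le_int[OF _ assms(3)] by simp
  then show False using assms(1,2) by linarith
qed

definition dirichlet :: "nat \<Rightarrow> complex \<Rightarrow> complex" where
  "dirichlet d w = (\<Sum>m<2*d-1. w ^ m) * cnj w ^ (d - 1)"

lemma dirichlet_cis: "dirichlet d (cis t) = (\<Sum>m<2*d-1. cis ((real m - real (d - 1)) * t))"
  unfolding dirichlet_def cis_cnj Complex.DeMoivre sum_distrib_right cis_mult
  by (intro sum.cong refl arg_cong[where f=cis]) (simp add: algebra_simps)

lemma norm_dirichlet_le:
  assumes "cmod w = 1"
  shows "cmod (dirichlet d w) \<le> real (2*d-1)"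
proof -
  have "cmod (dirichlet d w) = cmod (\<Sum>m<2*d-1. w ^ m)"
    using assms by (simp add: dirichlet_def norm_mult norm_power)
  also have "\<dots> \<le> (\<Sum>m<2*d-1. cmod (w ^ m))" by (rule norm_sum)
  finally show ?thesis using assms by (simp add: norm_power)
qed

text \<open>The kernel reproduces each frequency \<open>a - b\<close> with \<open>|a - b| < d\<close>: only the term
  \<open>m = a + (d - 1) - b\<close> survives the sum over the \<open>2d - 1\<close> nodes.\<close>
lemma sum_dirichlet_nodes:
  assumes "a < d" "b < d"
  shows "(\<Sum>l<2*d-1. cis (real a * (2*pi*real l/real (2*d-1))) * cis (- (real b * (2*pi*real l/real (2*d-1))))
           * dirichlet d (cis (t - 2*pi*real l/real (2*d-1))))
         = of_nat (2*d-1) * cis ((real a - real b) * t)"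
proof -
  define N where "N = 2*d-1"
  have N0: "N > 0" using assms by (simp add: N_def)
  define m0 where "m0 = a + (d - 1) - b"
  define k where "k m = int a - int b - int m + int (d - 1)" for m :: nat
  have ang: "real a * (2*pi*real l/real N) + (- (real b * (2*pi*real l/real N)))
        + (real m - real (d - 1)) * (t - 2*pi*real l/real N)
        = (real m - real (d - 1)) * t + 2 * pi * real l * of_int (k m) / real N" for l m
    using N0 by (simp add: k_def field_simps)
  have dvd_iff: "int N dvd k m \<longleftrightarrow> m = m0" if "m < N" for m
  proof
    assume dv: "int N dvd k m"
    have "\<bar>k m\<bar> < int N" using that assms by (auto simp: k_def N_def)
    then have "k m = 0" using dvd_imp_le_int[OF _ dv] by fastforce
    then show "m = m0" using assms by (simp add: k_def m0_def)
  qed (use assms in \<open>simp add: k_def m0_def\<close>)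
  have "(\<Sum>l<N. cis (real a * (2*pi*real l/real N)) * cis (- (real b * (2*pi*real l/real N)))
           * dirichlet d (cis (t - 2*pi*real l/real N)))
       = (\<Sum>l<N. \<Sum>m<N. cis ((real m - real (d - 1)) * t) * cis (2 * pi * real l * of_int (k m) / real N))"
    unfolding dirichlet_cis N_def[symmetric] sum_distrib_left
    by (intro sum.cong refl) (simp only: cis_mult ang)
  also have "\<dots> = (\<Sum>m<N. cis ((real m - real (d - 1)) * t) * (\<Sum>l<N. cis (2 * pi * real l * of_int (k m) / real N)))"
    by (subst sum.swap) (simp add: sum_distrib_left)
  also have "\<dots> = (\<Sum>m<N. if m = m0 then of_nat N * cis ((real m - real (d - 1)) * t) else 0)"
    by (intro sum.cong refl) (simp add: sum_cis_roots_of_unity[OF N0] dvd_iff)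
  also have "\<dots> = of_nat N * cis ((real a - real b) * t)"
    using assms by (simp add: N_def m0_def)
  finally show ?thesis by (simp add: N_def)
qed

lemma interpolation_mult_cnj:
  fixes f g :: "complex poly"
  assumes d1: "d \<ge> 1" and df: "degree f < d" and dg: "degree g < d" and z: "cmod z = 1"
  shows "poly f z * cnj (poly g z) =
    (\<Sum>l<2*d-1. poly f (omg d ^ l) * cnj (poly g (omg d ^ l)) * dirichlet d (z * cnj (omg d ^ l))) / of_nat (2*d-1)"
proof -
  obtain t where zt: "z = cis t" using norm_one_imp_cis[OF z] by blast
  define N where "N = 2*d-1"
  define F where "F a b = coeff f a * cnj (coeff g b)" for a b
  define G where "G a b l = cis (real a * (2*pi*real l/real N)) * cis (- (real b * (2*pi*real l/real N)))
           * dirichlet d (cis (t - 2*pi*real l/real N))" for a b l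
  have "poly f (omg d ^ l) * cnj (poly g (omg d ^ l)) * dirichlet d (z * cnj (omg d ^ l))
       = (\<Sum>a<d. \<Sum>b<d. F a b * G a b l)" for l
  proof -
    have zc: "z * cnj (omg d ^ l) = cis (t - 2*pi*real l/real N)"
      unfolding zt omg_power cis_cnj cis_mult N_def by simp
    have prod: "(\<Sum>a\<in>A. X a) * (\<Sum>b\<in>B. Y b) * D = (\<Sum>a\<in>A. \<Sum>b\<in>B. X a * Y b * D)"
      for A B X Y and D :: complex
      by (subst sum_product) (simp only: sum_distrib_right)
    show ?thesis
      unfolding F_def G_def
      by (simp only: zc, simp only: omg_power N_def[symmetric] poly_cis[OF df] cnj_poly_cis[OF dg] prod,
          intro sum.cong refl, simp only: mult_ac)
  qed
  then have "(\<Sum>l<N. poly f (omg d ^ l) * cnj (poly g (omg d ^ l)) * dirichlet d (z * cnj (omg d ^ l)))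
      = (\<Sum>l<N. \<Sum>a<d. \<Sum>b<d. F a b * G a b l)" by simp
  also have "\<dots> = (\<Sum>a<d. \<Sum>b<d. \<Sum>l<N. F a b * G a b l)"
    by (subst sum.swap) (rule sum.cong[OF refl], rule sum.swap)
  also have "\<dots> = (\<Sum>a<d. \<Sum>b<d. F a b * (of_nat N * cis ((real a - real b) * t)))"
  proof (intro sum.cong refl)
    fix a b assume "a \<in> {..<d}" "b \<in> {..<d}"
    then have "(\<Sum>l<N. G a b l) = of_nat N * cis ((real a - real b) * t)"
      unfolding G_def N_def by (intro sum_dirichlet_nodes) auto
    then show "(\<Sum>l<N. F a b * G a b l) = F a b * (of_nat N * cis ((real a - real b) * t))"
      by (simp add: sum_distrib_left[symmetric])
  qed
  also have "\<dots> = of_nat N * (\<Sum>a<d. \<Sum>b<d. F a b * cis ((real a - real b) * t))"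
    by (simp add: sum_distrib_left mult_ac)
  also have "(\<Sum>a<d. \<Sum>b<d. F a b * cis ((real a - real b) * t)) = poly f z * cnj (poly g z)"
    unfolding zt poly_cis[OF df] cnj_poly_cis[OF dg] sum_product F_def
    by (intro sum.cong refl) (simp add: mult_ac cis_mult algebra_simps)
  finally have "(\<Sum>l<N. poly f (omg d ^ l) * cnj (poly g (omg d ^ l)) * dirichlet d (z * cnj (omg d ^ l)))
      = of_nat N * (poly f z * cnj (poly g z))" .
  moreover have "of_nat N \<noteq> (0::complex)" using d1 by (simp only: of_nat_eq_0_iff N_def)
  ultimately show ?thesis unfolding N_def[symmetric] by simp
qed

lemma coeff_eq_dft:
  assumes d1: "d \<ge> 1" and dp: "degree p < d" and z: "cmod z0 = 1" and b: "b < d"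
  shows "coeff p b = (\<Sum>k<d. poly p (z0 * nu d ^ k) * cnj (z0 * nu d ^ k) ^ b) / of_nat d"
proof -
  obtain t where zt: "z0 = cis t" using norm_one_imp_cis[OF z] by blast
  have zk: "z0 * nu d ^ k = cis (t + 2*pi*real k/real d)" for k
    unfolding zt nu_power cis_mult by simp
  have inner: "(\<Sum>k<d. cis (real a * (t + 2*pi*real k/real d)) * cis (- (real b * (t + 2*pi*real k/real d))))
      = (if a = b then of_nat d else 0)" if a: "a < d" for a
  proof -
    have dvd_iff: "int d dvd (int a - int b) \<longleftrightarrow> a = b"
      using int_dvd_diff_imp_eq[OF a b] by auto
    have "(\<Sum>k<d. cis (real a * (t + 2*pi*real k/real d)) * cis (- (real b * (t + 2*pi*real k/real d))))
        = (\<Sum>k<d. cis ((real a - real b) * t) * cis (2 * pi * real k * of_int (int a - int b) / real d))"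
      unfolding cis_mult
      by (intro sum.cong refl arg_cong[where f=cis]) (simp add: algebra_simps add_divide_distrib diff_divide_distrib)
    also have "\<dots> = cis ((real a - real b) * t) * (if int d dvd (int a - int b) then of_nat d else 0)"
      using d1 by (subst sum_distrib_left[symmetric], subst sum_cis_roots_of_unity) auto
    finally show ?thesis using dvd_iff by simp
  qed
  have "(\<Sum>k<d. poly p (z0 * nu d ^ k) * cnj (z0 * nu d ^ k) ^ b)
      = (\<Sum>k<d. \<Sum>a<d. coeff p a * (cis (real a * (t + 2*pi*real k/real d)) * cis (- (real b * (t + 2*pi*real k/real d)))))"
  proof -
    have "cnj (z0 * nu d ^ k) ^ b = cis (- (real b * (t + 2*pi*real k/real d)))" for k
      unfolding zk cis_cnj Complex.DeMoivre by (rule arg_cong[where f=cis]) (simp add: algebra_simps)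
    then show ?thesis unfolding zk poly_cis[OF dp] sum_distrib_right by (simp add: mult_ac)
  qed
  also have "\<dots> = (\<Sum>a<d. coeff p a * (\<Sum>k<d. cis (real a * (t + 2*pi*real k/real d)) * cis (- (real b * (t + 2*pi*real k/real d)))))"
    by (subst sum.swap) (simp add: sum_distrib_left)
  also have "\<dots> = coeff p b * of_nat d"
    using b by (simp add: inner if_distrib sum.delta cong: if_cong)
  finally show ?thesis using d1 by simp
qed

lemma dft_coeff_error:
  assumes d1: "d \<ge> 1" and dp: "degree p < d" and z: "cmod z0 = 1" and b: "b < d"
    and err: "\<And>k. k < d \<Longrightarrow> cmod (v k - c * poly p (z0 * nu d ^ k)) \<le> E"
  shows "cmod ((\<Sum>k<d. v k * cnj (z0 * nu d ^ k) ^ b) / of_nat d - c * coeff p b) \<le> E"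
proof -
  have "(\<Sum>k<d. v k * cnj (z0 * nu d ^ k) ^ b) / of_nat d - c * coeff p b
     = (\<Sum>k<d. (v k - c * poly p (z0 * nu d ^ k)) * cnj (z0 * nu d ^ k) ^ b) / of_nat d"
    unfolding coeff_eq_dft[OF d1 dp z b] using d1
    by (simp add: sum_distrib_left sum_subtractf algebra_simps diff_divide_distrib)
  also have "cmod \<dots> \<le> (\<Sum>k<d. cmod ((v k - c * poly p (z0 * nu d ^ k)) * cnj (z0 * nu d ^ k) ^ b)) / real d"
    by (simp add: norm_divide norm_sum divide_right_mono)
  also have "\<dots> \<le> (\<Sum>k<d. E) / real d"
    using z by (intro divide_right_mono sum_mono) (simp_all add: norm_mult norm_power err)
  finally show ?thesis using d1 by simp
qed


section \<open>Lower bounds away from the roots\<close>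

lemma quadratic_chord_ineq:
  fixes a t :: real
  assumes a1: "a \<le> 1" and a2: "-1 \<le> a" and t0: "t \<ge> 0"
  shows "(2 - 2*a) * (1+t)\<^sup>2 \<le> 16 * (1 - 2*a*t + t\<^sup>2)"
proof -
  have h2: "4*(a*t) \<le> 1 + a + t\<^sup>2 + a*t\<^sup>2"
  proof (cases "a \<le> 0")
    case True
    have "a*t \<le> 0" using True t0 by (simp add: mult_nonpos_nonneg)
    moreover have "a*t\<^sup>2 \<ge> -t\<^sup>2" using mult_right_mono[OF a2 zero_le_power2[of t]] by simp
    ultimately show ?thesis using a2 by linarith
  next
    case False
    have "2*t \<le> 1+t\<^sup>2" using zero_le_square[of "t-1"] by (simp add: power2_eq_square algebra_simps)
    then have "(2*t)*(2*a) \<le> (1+t\<^sup>2)*(1+a)"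
      using False t0 a1 by (intro mult_mono) auto
    then show ?thesis by (simp add: algebra_simps)
  qed
  have "a*t \<le> t" using mult_right_mono[OF a1 t0] by simp
  moreover have "2*t \<le> 1 + t\<^sup>2" using zero_le_square[of "t-1"] by (simp add: power2_eq_square algebra_simps)
  ultimately show ?thesis using h2 by (simp add: power2_eq_square algebra_simps)
qed

text \<open>With \<open>w = z \<cdot> conj (sgn r)\<close> both sides depend only on \<open>Re w\<close> and \<open>|r|\<close>.\<close>
lemma norm_diff_sgn_mult_le:
  fixes z r :: complex
  assumes z: "cmod z = 1" and r: "r \<noteq> 0"
  shows "cmod (z - sgn r) * (1 + cmod r) \<le> 4 * cmod (z - r)"
proof -
  define u where "u = sgn r"
  define w where "w = z * cnj u"
  define t where "t = cmod r"
  have u1: "cmod u = 1" using r by (simp add: u_def norm_sgn)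
  have w1: "cmod w = 1" using z u1 by (simp add: w_def norm_mult)
  have uu: "u * cnj u = 1" using r by (simp add: u_def sgn_mult_cnj_sgn)
  have zu: "z = w * u" using uu by (simp add: w_def mult.assoc mult.commute)
  have ru: "r = of_real t * u" using r by (simp add: u_def t_def sgn_div_norm scaleR_conv_of_real)
  have "z - r = u * (w - of_real t)" by (simp add: zu ru algebra_simps)
  then have e1: "cmod (z - r) = cmod (w - of_real t)" using u1 by (simp add: norm_mult)
  have "z - u = u * (w - 1)" by (simp add: zu algebra_simps)
  then have e2: "cmod (z - u) = cmod (w - 1)" using u1 by (simp add: norm_mult)
  have ab: "(Re w)\<^sup>2 + (Im w)\<^sup>2 = 1" using w1 by (simp add: cmod_def)
  have a1: "Re w \<le> 1" "-1 \<le> Re w" using abs_Re_le_cmod[of w] w1 by auto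
  have "(cmod (w - of_real t))\<^sup>2 = (Re w - t)\<^sup>2 + (Im w)\<^sup>2" by (simp add: cmod_power2)
  then have s1: "(cmod (w - of_real t))\<^sup>2 = 1 - 2 * Re w * t + t\<^sup>2"
    using ab by (simp add: power2_eq_square algebra_simps)
  have "(cmod (w - 1))\<^sup>2 = (Re w - 1)\<^sup>2 + (Im w)\<^sup>2" by (simp add: cmod_power2)
  then have s2: "(cmod (w - 1))\<^sup>2 = 2 - 2 * Re w"
    using ab by (simp add: power2_eq_square algebra_simps)
  have "(cmod (w - 1) * (1 + t))\<^sup>2 \<le> (4 * cmod (w - of_real t))\<^sup>2"
    using quadratic_chord_ineq[OF a1] s1 s2 by (simp add: power_mult_distrib t_def)
  then have "cmod (w - 1) * (1 + t) \<le> 4 * cmod (w - of_real t)"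
    by (rule power2_le_imp_le) simp
  then show ?thesis using e1 e2 by (simp add: u_def t_def)
qed

definition coeff_l1 :: "complex poly \<Rightarrow> real" where
  "coeff_l1 p = (\<Sum>i\<le>degree p. cmod (coeff p i))"

lemma coeff_l1_eq_sum_lessThan: "degree p < n \<Longrightarrow> coeff_l1 p = (\<Sum>i<n. cmod (coeff p i))"
  unfolding coeff_l1_def by (rule sum_coeff_upto_degree) simp_all

lemma pnorm_le_coeff_l1: "pnorm p \<le> coeff_l1 p"
proof -
  have "pnorm p = L2_set (\<lambda>i. cmod (coeff p i)) {..degree p}"
    by (simp add: pnorm_def L2_set_def)
  also have "\<dots> \<le> coeff_l1 p" unfolding coeff_l1_def by (rule L2_set_le_sum) simp
  finally show ?thesis .
qed

lemma coeff_l1_linear_factor_mult: "coeff_l1 ([:-r, 1:] * q) \<le> (1 + cmod r) * coeff_l1 q"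
proof -
  define n where "n = degree q + 2"
  have dn: "degree ([:-r, 1:] * q) < n"
    using degree_mult_le[of "[:-r, 1:]" q] by (simp add: n_def)
  have "(\<Sum>i<n. cmod (coeff (pCons 0 q) i))
      = cmod (coeff (pCons 0 q) 0) + (\<Sum>i<degree q + 1. cmod (coeff (pCons 0 q) (Suc i)))"
    unfolding n_def by (subst sum.lessThan_Suc_shift[symmetric]) simp
  then have shift: "(\<Sum>i<n. cmod (coeff (pCons 0 q) i)) = coeff_l1 q"
    using coeff_l1_eq_sum_lessThan[of q "Suc (degree q)"] by simp
  have "coeff_l1 ([:-r, 1:] * q) \<le> (\<Sum>i<n. cmod r * cmod (coeff q i) + cmod (coeff (pCons 0 q) i))"
    unfolding coeff_l1_eq_sum_lessThan[OF dn]
  proof (intro sum_mono)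
    fix i
    have eq: "coeff ([:-r, 1:] * q) i = coeff (pCons 0 q) i - r * coeff q i" by simp
    show "cmod (coeff ([:-r, 1:] * q) i) \<le> cmod r * cmod (coeff q i) + cmod (coeff (pCons 0 q) i)"
      using norm_triangle_ineq4[of "coeff (pCons 0 q) i" "r * coeff q i"] unfolding norm_mult eq by linarith
  qed
  also have "\<dots> = cmod r * coeff_l1 q + coeff_l1 q"
    using coeff_l1_eq_sum_lessThan[of q n]
    by (simp only: sum.distrib sum_distrib_left[symmetric] shift) (simp add: n_def)
  finally show ?thesis by (simp add: algebra_simps)
qed

text \<open>Each linear factor \<open>X - r\<close> of \<open>p\<close> has \<open>|z - r| \<ge> (\<delta>/4)(1 + |r|)\<close>, while multiplying
  by it enlarges the \<open>\<ell>\<^sup>1\<close> norm of the coefficients by at most the factor \<open>1 + |r|\<close>.\<close>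
lemma norm_poly_ge_far_from_roots:
  fixes p :: "complex poly"
  assumes "p \<noteq> 0" "cmod z = 1" "0 < \<delta>" "\<delta> \<le> 2"
    and "\<And>r. poly p r = 0 \<Longrightarrow> r \<noteq> 0 \<Longrightarrow> \<delta> \<le> cmod (z - sgn r)"
  shows "(\<delta>/4) ^ degree p * coeff_l1 p \<le> cmod (poly p z)"
  using assms
proof (induction "degree p" arbitrary: p)
  case 0
  then show ?case by (simp add: coeff_l1_def poly_altdef)
next
  case (Suc m)
  obtain r where r: "poly p r = 0"
    using Suc.hyps(2) fundamental_theorem_of_algebra constant_degree by (metis nat.distinct(1))
  define q where "q = synthetic_div p r"
  have pq: "p = [:-r, 1:] * q" using synthetic_div_correct'[of r p] r by (simp add: q_def)
  have q0: "q \<noteq> 0" using pq Suc.prems(1) by auto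
  have "degree ([:-r, 1:] * q) = degree [:-r, 1:] + degree q" using q0 by (intro degree_mult_eq) auto
  then have dq: "degree p = Suc (degree q)" unfolding pq by simp
  have IH: "(\<delta>/4) ^ degree q * coeff_l1 q \<le> cmod (poly q z)"
    using Suc.hyps(1)[of q] Suc.hyps(2) Suc.prems dq q0 by (auto simp: pq poly_mult)
  have zr: "(\<delta>/4) * (1 + cmod r) \<le> cmod (z - r)"
  proof (cases "r = 0")
    case False
    have "\<delta> * (1 + cmod r) \<le> cmod (z - sgn r) * (1 + cmod r)"
      using Suc.prems(5)[OF r False] by (intro mult_right_mono) auto
    also have "\<dots> \<le> 4 * cmod (z - r)" by (rule norm_diff_sgn_mult_le[OF Suc.prems(2) False])
    finally show ?thesis by simp
  qed (use Suc.prems in simp)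
  have "(\<delta>/4) ^ degree p * coeff_l1 p \<le> (\<delta>/4) ^ degree p * ((1 + cmod r) * coeff_l1 q)"
    using coeff_l1_linear_factor_mult[of r q] Suc.prems(3) unfolding pq[symmetric] by (intro mult_left_mono) auto
  also have "\<dots> = ((\<delta>/4) * (1 + cmod r)) * ((\<delta>/4) ^ degree q * coeff_l1 q)"
    using dq by (simp add: algebra_simps)
  also have "\<dots> \<le> cmod (z - r) * cmod (poly q z)"
    using zr IH Suc.prems(3) by (intro mult_mono) (auto simp: coeff_l1_def sum_nonneg)
  also have "\<dots> = cmod (poly p z)" by (simp add: pq norm_mult flip: left_diff_distrib)
  finally show ?case .
qed


section \<open>An orbit far from all roots\<close>

definition grid :: "nat \<Rightarrow> nat \<Rightarrow> nat \<Rightarrow> complex" where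
  "grid d j k = omg d ^ j * nu d ^ k"

lemma norm_grid [simp]: "cmod (grid d j k) = 1"
  by (simp add: grid_def norm_mult norm_power)

lemma grid_Suc: "grid d j k * nu d = grid d j (Suc k)"
  by (simp add: grid_def mult.assoc mult.commute)

lemma grid_eq_cis:
  assumes "d \<ge> 1"
  shows "grid d j k = cis (2*pi * of_int (int j * int d + int k * int (2*d-1)) / real (d*(2*d-1)))"
  unfolding grid_def omg_power nu_power cis_mult
  using assms by (intro arg_cong[where f=cis]) (simp add: field_simps)

lemma norm_cis_minus_one: "cmod (cis x - 1) = 2 * \<bar>sin (x/2)\<bar>"
proof -
  have "(cmod (cis x - 1))\<^sup>2 = (cos x - 1)\<^sup>2 + (sin x)\<^sup>2" by (simp add: cmod_power2)
  also have "\<dots> = 2 - 2 * cos x" using sin_cos_squared_add[of x] by (simp add: power2_eq_square algebra_simps)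
  also have "\<dots> = (2 * \<bar>sin (x/2)\<bar>)\<^sup>2" using cos_double_sin[of "x/2"] by (simp add: power2_eq_square)
  finally show ?thesis by (rule power2_eq_imp_eq) simp_all
qed

lemma sin_pi_div_le_sin_multiple:
  fixes M s :: nat
  assumes "1 \<le> s" "s < M"
  shows "sin (pi / real M) \<le> sin (pi * real s / real M)"
proof -
  have mono: "sin (pi / real M) \<le> sin (pi * real n / real M)" if "1 \<le> n" "2 * n \<le> M" for n
  proof (rule sin_monotone_2pi_le)
    show "- (pi / 2) \<le> pi / real M" using pi_gt_zero by (smt (verit) divide_nonneg_nonneg of_nat_0_le_iff)
    show "pi / real M \<le> pi * real n / real M" using that by (simp add: divide_right_mono)
    show "pi * real n / real M \<le> pi / 2" using that assms pi_gt_zero by (simp add: field_simps)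
  qed
  show ?thesis
  proof (cases "2 * s \<le> M")
    case False
    have "sin (pi * real s / real M) = sin (pi - pi * real s / real M)" by simp
    also have "pi - pi * real s / real M = pi * real (M - s) / real M"
      using assms by (simp add: field_simps of_nat_diff)
    finally show ?thesis using mono[of "M - s"] False assms by simp
  qed (use mono assms in simp)
qed

lemma norm_cis_int_minus_one_ge:
  fixes M :: nat and t :: int
  assumes M: "M \<ge> 2" and nd: "\<not> int M dvd t"
  shows "2 * sin (pi / real M) \<le> cmod (cis (2*pi * of_int t / real M) - 1)"
proof -
  define n where "n = nat (t mod int M)"
  have s: "0 \<le> t mod int M" "t mod int M < int M" "t mod int M \<noteq> 0"
    using M nd by (simp_all add: dvd_eq_mod_eq_0)
  then have n: "1 \<le> n" "n < M" and tn: "t = int M * (t div int M) + int n"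
    by (auto simp: n_def)
  have "cis (2*pi * of_int t / real M) = cis (2*pi*real n / real M) * cis (2*pi * of_int (t div int M))"
    unfolding cis_mult using M by (subst tn) (simp add: field_simps)
  then have e: "cis (2*pi * of_int t / real M) = cis (2*pi*real n / real M)"
    by (simp add: cis_multiple_2pi)
  have "0 \<le> sin (pi * real n / real M)"
    using n by (intro sin_ge_zero) (simp_all add: field_simps)
  then have "cmod (cis (2*pi*real n / real M) - 1) = 2 * sin (pi * real n / real M)"
    unfolding norm_cis_minus_one by simp
  then show ?thesis using e sin_pi_div_le_sin_multiple[OF n] by simp
qed

text \<open>Distinct orbits are separated: \<open>\<omega>\<^sup>j \<nu>\<^sup>k\<close> is the \<open>(jd + k(2d-1))\<close>-th root of unity of order
  \<open>d(2d - 1)\<close>, and since \<open>2d \<equiv> 1 (mod 2d - 1)\<close> the residue mod \<open>2d - 1\<close> determines \<open>j\<close>.\<close>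
lemma grid_points_separated:
  assumes d: "d \<ge> 2" and j: "j \<in> {1..2*d-1}" and j': "j' \<in> {1..2*d-1}" and jj: "j \<noteq> j'"
  shows "2 * sin (pi / real (d*(2*d-1))) \<le> cmod (grid d j k - grid d j' k')"
proof -
  define N where "N = 2*d-1"
  define M where "M = d*(2*d-1)"
  define A where "A = int j * int d + int k * int N"
  define B where "B = int j' * int d + int k' * int N"
  have "d \<le> d * (2*d-1)" using d by simp
  then have M2: "M \<ge> 2" using d unfolding M_def by linarith
  have nd: "\<not> int M dvd (A - B)"
  proof
    assume "int M dvd (A - B)"
    then have "int N dvd (A - B)" by (rule dvd_trans[rotated]) (simp add: M_def N_def)
    moreover have "A - B = (int j - int j') * int d + (int k - int k') * int N"
      by (simp add: A_def B_def algebra_simps)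
    ultimately have "int N dvd (int j - int j') * int d * 2" by (simp add: dvd_add_left_iff)
    moreover have "(int j - int j') * int d * 2 = (int j - int j') * int N + (int j - int j')"
      using d by (simp add: N_def algebra_simps of_nat_diff)
    ultimately have "int N dvd (int j - int j')" by (simp add: dvd_add_right_iff)
    then have "int N dvd int (j - 1) - int (j' - 1)" using j j' by (simp add: of_nat_diff)
    then have "j - 1 = j' - 1" using int_dvd_diff_imp_eq[of "j-1" N "j'-1"] j j' by (auto simp: N_def)
    then show False using j j' jj by arith
  qed
  have "grid d j k - grid d j' k' = cis (2*pi * of_int A / real M) - cis (2*pi * of_int B / real M)"
    using d grid_eq_cis[of d] by (simp add: A_def B_def M_def N_def)
  also have "\<dots> = cis (2*pi * of_int B / real M) * (cis (2*pi * of_int (A - B) / real M) - 1)"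
    by (simp add: right_diff_distrib cis_mult diff_divide_distrib)
  finally show ?thesis
    using norm_cis_int_minus_one_ge[OF M2 nd] by (simp add: norm_mult M_def)
qed

text \<open>Pigeonhole: an orbit coming closer than \<open>\<delta>\<close> to a root direction can be assigned that
  direction injectively, and there are only \<open>degree p < 2d - 1\<close> root directions.\<close>
lemma exists_orbit_far_from_roots:
  assumes d: "d \<ge> 2" and p0: "p \<noteq> 0" and dp: "degree p < d"
  shows "\<exists>j\<in>{1..2*d-1}. \<forall>k<d. \<forall>r. poly p r = 0 \<longrightarrow> r \<noteq> 0 \<longrightarrow>
           sin (pi / real (d*(2*d-1))) \<le> cmod (grid d j k - sgn r)"
proof (rule ccontr)
  define \<delta> where "\<delta> = sin (pi / real (d*(2*d-1)))"
  define N where "N = 2*d-1"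
  define U where "U = sgn ` {r. poly p r = 0 \<and> r \<noteq> 0}"
  assume "\<not> ?thesis"
  then have "\<exists>u\<in>U. \<exists>k<d. cmod (grid d j k - u) < \<delta>" if "j \<in> {1..N}" for j
    using that unfolding \<delta>_def N_def U_def by (force simp: not_le)
  then obtain f where f: "f j \<in> U" "\<exists>k<d. cmod (grid d j k - f j) < \<delta>" if "j \<in> {1..N}" for j
    by metis
  have "inj_on f {1..N}"
  proof (rule inj_onI, rule ccontr)
    fix j j' assume j: "j \<in> {1..N}" and j': "j' \<in> {1..N}" and e: "f j = f j'" and jj: "j \<noteq> j'"
    obtain k k' where k: "cmod (grid d j k - f j) < \<delta>" and k': "cmod (grid d j' k' - f j) < \<delta>"
      using f(2)[OF j] f(2)[OF j'] e by auto
    have "2 * \<delta> \<le> cmod (grid d j k - grid d j' k')"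
      unfolding \<delta>_def using grid_points_separated[OF d _ _ jj] j j' by (simp add: N_def)
    also have "\<dots> \<le> cmod (grid d j k - f j) + cmod (grid d j' k' - f j)"
      using norm_triangle_ineq4[of "grid d j k - f j" "grid d j' k' - f j"] by simp
    finally show False using k k' by simp
  qed
  moreover have "f ` {1..N} \<subseteq> U" using f by auto
  moreover have fin: "finite {r. poly p r = 0}" using poly_roots_finite[OF p0] .
  ultimately have "card {1..N} \<le> card U"
    by (intro card_inj_on_le) (auto simp: U_def intro: finite_subset)
  also have "card U \<le> card {r. poly p r = 0}"
    unfolding U_def using fin by (intro card_image_le[THEN order_trans] card_mono) (auto intro: finite_subset)
  also have "\<dots> \<le> degree p" by (rule card_poly_roots_bound[OF p0])
  finally show False using dp d by (simp add: N_def)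
qed

lemma sin_pi_div_grid_pos:
  assumes "d \<ge> 2"
  shows "0 < sin (pi / real (d*(2*d-1)))"
proof (rule sin_gt_zero)
  have "d \<le> d * (2*d-1)" using assms by simp
  then have M2: "real (d*(2*d-1)) \<ge> 2" using assms by linarith
  then show "0 < pi / real (d*(2*d-1))" using pi_gt_zero by (intro divide_pos_pos) linarith+
  have "pi / real (d*(2*d-1)) \<le> pi / 2" using M2 pi_gt_zero by (intro divide_left_mono) linarith+
  also have "pi / 2 < pi" using pi_gt_zero by simp
  finally show "pi / real (d*(2*d-1)) < pi" .
qed

lemma exists_orbit_lower_bound:
  assumes d: "d \<ge> 2" and p0: "p \<noteq> 0" and dp: "degree p < d"
  shows "\<exists>j\<in>{1..2*d-1}. \<forall>k<d. (sin (pi / real (d*(2*d-1))) / 4) ^ (d-1) * pnorm p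
            \<le> cmod (poly p (grid d j k))"
proof -
  define \<delta> where "\<delta> = sin (pi / real (d*(2*d-1)))"
  obtain j where j: "j \<in> {1..2*d-1}"
    and far: "\<forall>k<d. \<forall>r. poly p r = 0 \<longrightarrow> r \<noteq> 0 \<longrightarrow> \<delta> \<le> cmod (grid d j k - sgn r)"
    using exists_orbit_far_from_roots[OF d p0 dp] unfolding \<delta>_def by blast
  have \<delta>: "0 < \<delta>" "\<delta> \<le> 1" using sin_pi_div_grid_pos[OF d] by (simp_all add: \<delta>_def)
  have "(\<delta> / 4) ^ (d-1) * pnorm p \<le> cmod (poly p (grid d j k))" if k: "k < d" for k
  proof -
    have "(\<delta>/4) ^ (d-1) * pnorm p \<le> (\<delta>/4) ^ degree p * coeff_l1 p"
      using dp \<delta> by (intro mult_mono power_decreasing pnorm_le_coeff_l1) (auto simp: pnorm_nonneg)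
    also have "\<dots> \<le> cmod (poly p (grid d j k))"
      using far k \<delta> by (intro norm_poly_ge_far_from_roots[OF p0]) auto
    finally show ?thesis .
  qed
  then show ?thesis using j unfolding \<delta>_def by blast
qed


section \<open>Estimates for \<open>\<beta>\<close>\<close>

lemma sin_ge_cubic:
  fixes y :: real
  assumes "0 \<le> y"
  shows "y - y^3/6 \<le> sin y"
proof -
  have "\<bar>sin y - (\<Sum>m<3. sin_coeff m * y ^ m)\<bar> \<le> inverse (fact 3) * \<bar>y\<bar> ^ 3"
    by (rule Maclaurin_sin_bound)
  moreover have "(\<Sum>m<3. sin_coeff m * y ^ m) = y"
    by (simp add: sin_coeff_def eval_nat_numeral)
  moreover have "inverse (fact 3) * \<bar>y\<bar> ^ 3 = y^3/6"
    using assms by (simp add: eval_nat_numeral)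
  ultimately show ?thesis by linarith
qed

lemma pi_bounds: "314159/100000 \<le> pi" "pi \<le> 31416/10000"
  using pi_approx by simp_all

lemma rr_bounds:
  assumes d: "d \<ge> 2"
  shows "0 < rr d" "rr d \<le> 2*pi/(real (d-1) * real d ^ 2)"
proof -
  define x where "x = 2*pi/(real (d-1) * real d ^ 2)"
  have D: "1 * 4 \<le> real (d-1) * real d ^ 2"
    using d power_mono[of 2 "real d" 2] by (intro mult_mono) (auto simp: of_nat_diff)
  have x0: "0 < x" unfolding x_def using D pi_gt_zero by (intro divide_pos_pos) linarith+
  have "x \<le> 2*pi/4" unfolding x_def using D pi_gt_zero by (intro divide_left_mono) linarith+
  then have "x < pi" using pi_gt_zero by linarith
  then show "0 < rr d" "rr d \<le> x" unfolding rr_def x_def[symmetric]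
    using x0 by (auto intro!: sin_gt_zero sin_x_le_x)
qed

lemma prod_rr_ge_1: "d \<ge> 2 \<Longrightarrow> 1 \<le> (\<Prod>k=1..d-1. rr d ^ k + 1)"
  using rr_bounds(1) by (intro prod_ge_1) (simp add: less_imp_le)

lemma beta_pos: "d \<ge> 2 \<Longrightarrow> 0 < beta d"
  unfolding beta_def using rr_bounds(1)[of d] prod_rr_ge_1[of d]
  by (intro divide_pos_pos mult_pos_pos) auto

lemma beta_two: "beta 2 = 1/16"
  by (simp add: beta_def rr_def power2_eq_square)

lemma beta_three: "beta 3 = rr 3 ^ 3 / 27 / ((rr 3 + 1) * (rr 3 ^ 2 + 1))"
proof -
  have "{1..3-1::nat} = {1, 2}" by auto
  moreover have "rr 3 powr (real ((3-1)*3::nat) / 2) = rr 3 ^ 3"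
    using rr_bounds(1)[of 3] by (simp add: powr_realpow)
  ultimately show ?thesis by (simp add: beta_def power_divide)
qed

lemma beta_three_le: "beta 3 \<le> (sin (pi / real (3*(2*3-1))) / 4) ^ (3-1) / 2"
proof -
  define r where "r = rr 3"
  have rdef: "r = sin (pi/9)" by (simp add: r_def rr_def)
  have r_ub: "r \<le> 35/100"
    using sin_x_le_x[of "pi/9"] pi_gt_zero pi_bounds unfolding rdef by linarith
  have r_lb: "34/100 \<le> r"
  proof -
    have "(pi/9)^3 \<le> (35/100)^3" using pi_bounds pi_gt_zero by (intro power_mono) auto
    then show ?thesis
      using sin_ge_cubic[of "pi/9"] pi_gt_zero pi_bounds unfolding rdef by (simp add: eval_nat_numeral)
  qed
  have den: "(134/100) * (11156/10000) \<le> (r + 1) * (r^2 + 1)"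
    using r_lb power_mono[OF r_lb, of 2] by (intro mult_mono) (auto simp: eval_nat_numeral)
  have "beta 3 \<le> (35/100)^3 / 27 / ((134/100) * (11156/10000))"
    unfolding beta_three r_def[symmetric] using power_mono[OF r_ub, of 3] den r_lb
    by (intro divide_mono divide_right_mono) (auto intro: mult_pos_pos)
  also have "\<dots> \<le> ((2077/10000)/4)^2/2" by (simp add: power_divide eval_nat_numeral)
  also have "\<dots> \<le> (sin (pi / 15) / 4)^2/2"
  proof -
    have "(pi/15)^3 \<le> (21/100)^3" using pi_bounds pi_gt_zero by (intro power_mono) auto
    then have "2077/10000 \<le> sin (pi/15)"
      using sin_ge_cubic[of "pi/15"] pi_gt_zero pi_bounds by (simp add: eval_nat_numeral)
    then show ?thesis by (intro divide_right_mono power_mono) auto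
  qed
  finally show ?thesis by simp
qed

lemma sin_pi_div_grid_ge:
  assumes "real M \<ge> 28"
  shows "1 / (2 * real M) \<le> sin (pi / real M) / 4"
proof -
  define y where "y = pi / real M"
  have y0: "0 \<le> y" and y1: "y \<le> 1" using assms pi_bounds by (simp_all add: y_def field_simps)
  have "y^3 \<le> y" using y0 y1 by (simp add: power3_eq_cube mult_le_one mult_left_le_one_le)
  then have "5*y/6 \<le> sin y" using sin_ge_cubic[OF y0] by simp
  moreover have "2 / real M \<le> 5*y/6" using assms pi_bounds by (simp add: y_def field_simps)
  ultimately show ?thesis by (simp add: y_def)
qed

lemma rr_bound_sq_le:
  assumes d: "d \<ge> 4"
  shows "(2*pi/(real (d-1) * real d ^ 2))\<^sup>2 \<le> 1 / real (d*(2*d-1))"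
proof -
  define D where "D = real d"
  define M where "M = real (d*(2*d-1))"
  have D4: "D \<ge> 4" using d by (simp add: D_def)
  have MD: "M = 2*D^2 - D" using d by (simp add: M_def D_def of_nat_diff power2_eq_square algebra_simps)
  have pi2: "pi^2 \<le> 10" using power_mono[OF pi_bounds(2), of 2] pi_gt_zero by (simp add: eval_nat_numeral)
  have "9 * 16 \<le> (D-1)^2 * D^2"
    using D4 power_mono[of 3 "D-1" 2] power_mono[of 4 D 2] by (intro mult_mono) auto
  then have "144 * D^2 \<le> (D-1)^2 * D^2 * D^2" by (intro mult_right_mono) auto
  moreover have "(D-1)^2 * D^2 * D^2 = (D-1)^2 * D^4" by (simp add: power_add[symmetric])
  moreover have "4 * pi^2 * M \<le> 4 * 10 * M"
    using pi2 by (intro mult_right_mono) (auto simp: M_def)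
  moreover have "D^2 \<ge> 0" by simp
  ultimately have key: "4 * pi^2 * M \<le> (D-1)^2 * D^4" using D4 MD by linarith
  have Q: "(real (d-1) * real d ^ 2)^2 = (D-1)^2 * D^4"
    using d by (simp add: D_def of_nat_diff power_mult_distrib power2_eq_square eval_nat_numeral)
  have "0 < (D-1)^2 * D^4" using D4 by simp
  moreover have "0 < M" unfolding M_def using d by simp
  ultimately show ?thesis using key unfolding M_def[symmetric] power_divide Q by (simp add: field_simps)
qed

lemma beta_le_rr_power:
  assumes d: "d \<ge> 4"
  shows "beta d \<le> rr d ^ (2*(d-1)) * (1/2) ^ d"
proof -
  define r where "r = rr d"
  define numer where "numer = r powr (real ((d - 1) * d) / 2) * ((real d - 1) / (2 * real d)) ^ d * (2 / (real d - 1))"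
  have r: "0 < r" "r \<le> 1" using rr_bounds(1)[of d] d by (auto simp: r_def rr_def)
  have "2*(2*(d-1)) \<le> (d-1)*d" using d mult_le_mono2[of 4 d "d-1"] by simp
  then have "real (2*(d-1)) \<le> real ((d - 1) * d) / 2" by linarith
  then have "r powr (real ((d - 1) * d) / 2) \<le> r powr real (2*(d-1))"
    using r by (intro powr_mono') auto
  also have "\<dots> = r ^ (2*(d-1))" using r(1) by (rule powr_realpow)
  finally have a: "r powr (real ((d - 1) * d) / 2) \<le> r ^ (2*(d-1))" .
  have b: "((real d - 1) / (2 * real d)) ^ d \<le> (1/2) ^ d"
    using d by (intro power_mono) (auto simp: field_simps)
  have c: "2 / (real d - 1) \<le> 1" using d by simp
  have "beta d = numer / (\<Prod>k=1..d-1. r ^ k + 1)" by (simp add: beta_def numer_def r_def)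
  also have "\<dots> \<le> numer / 1"
    using prod_rr_ge_1[of d] d r unfolding r_def numer_def by (intro divide_left_mono) auto
  also have "\<dots> \<le> r ^ (2*(d-1)) * (1/2) ^ d * 1"
    unfolding numer_def div_by_1 using a b c d r by (intro mult_mono) auto
  finally show ?thesis by (simp add: r_def)
qed

lemma beta_ge_four_le:
  assumes d: "d \<ge> 4"
  shows "beta d \<le> (sin (pi / real (d*(2*d-1))) / 4) ^ (d-1) / 2"
proof -
  define M where "M = real (d*(2*d-1))"
  define x where "x = 2*pi/(real (d-1) * real d ^ 2)"
  have M28: "M \<ge> 28"
    using d mult_mono[of 4 "real d" 7 "2 * real d - 1"] by (simp add: M_def of_nat_diff)
  have rx: "rr d ^ (2*(d-1)) \<le> x ^ (2*(d-1))"
    using rr_bounds[of d] d by (intro power_mono) (auto simp: x_def)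
  have "beta d \<le> rr d ^ (2*(d-1)) * (1/2) ^ d" by (rule beta_le_rr_power[OF d])
  also have "\<dots> \<le> x ^ (2*(d-1)) * (1/2) ^ d" by (rule mult_right_mono[OF rx]) simp
  also have "\<dots> = (x^2/2) ^ (d-1) / 2"
    using d by (cases d) (simp_all add: power_mult power_divide)
  also have "\<dots> \<le> (1/(2*M)) ^ (d-1) / 2"
    using rr_bound_sq_le[OF d] by (intro divide_right_mono power_mono) (simp_all add: x_def M_def)
  also have "\<dots> \<le> (sin (pi / M) / 4) ^ (d-1) / 2"
  proof (intro divide_right_mono power_mono)
    show "1 / (2 * M) \<le> sin (pi / M) / 4"
      using sin_pi_div_grid_ge[of "d*(2*d-1)"] M28 unfolding M_def by blast
  qed (use M28 in auto)
  finally show ?thesis by (simp add: M_def)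
qed

lemma beta_le_orbit_bound:
  assumes "d \<ge> 2"
  shows "beta d \<le> (sin (pi / real (d*(2*d-1))) / 4) ^ (d-1) / 2"
proof -
  consider "d = 2" | "d = 3" | "d \<ge> 4" using assms by linarith
  then show ?thesis
  proof cases
    case 1
    then show ?thesis using sin_30 by (simp add: beta_two)
  qed (use beta_three_le beta_ge_four_le in simp_all)
qed

lemma beta_le_inverse_grid:
  assumes d: "d \<ge> 2"
  shows "beta d \<le> 1 / (2 * real (d*(2*d-1)))"
proof -
  define M where "M = real (d*(2*d-1))"
  define \<delta> where "\<delta> = sin (pi / M)"
  have \<delta>: "0 < \<delta>" "\<delta> \<le> 1" using sin_pi_div_grid_pos[OF d] by (simp_all add: \<delta>_def M_def)
  have "d \<le> d * (2*d-1)" using d by simp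
  then have M2: "M \<ge> 2" using d unfolding M_def by linarith
  have "(\<delta>/4) ^ (d-1) \<le> \<delta>/4" using \<delta> d power_decreasing[of 1 "d-1" "\<delta>/4"] by simp
  also have "\<dots> \<le> pi / M / 4" unfolding \<delta>_def using M2 by (intro divide_right_mono sin_x_le_x) simp_all
  also have "\<dots> \<le> 1 / M" using M2 pi_less_4 by (simp add: field_simps)
  finally have "(\<delta>/4) ^ (d-1) \<le> 1 / M" .
  moreover have "beta d \<le> (\<delta>/4) ^ (d-1) / 2" using beta_le_orbit_bound[OF d] by (simp add: \<delta>_def M_def)
  ultimately have "beta d \<le> (1 / M) / 2" by (meson divide_right_mono order_trans zero_le_numeral)
  then show ?thesis by (simp add: M_def)
qed


section \<open>Estimates of \<open>|p(z)|\<^sup>2\<close> and \<open>p(z) \<cdot> conj (p(z\<nu>))\<close> from noisy measurements\<close>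

text \<open>Measurement vectors are indexed from \<open>1\<close>; by periodicity of \<open>\<omega>\<close> the nodes \<open>\<omega>\<^sup>l\<close>,
  \<open>1 \<le> l \<le> 2d - 1\<close>, are those of the interpolation formula.\<close>
definition sq_est :: "nat \<Rightarrow> (nat \<Rightarrow> real) \<Rightarrow> complex \<Rightarrow> real" where
  "sq_est d y z = Re ((\<Sum>l\<in>{1..2*d-1}. complex_of_real (y l) * dirichlet d (z * cnj (omg d ^ l))) / of_nat (2*d-1))"

text \<open>For \<open>a = p(\<omega>\<^sup>l)\<close> and \<open>b = p(\<omega>\<^sup>l \<nu>)\<close> the entries \<open>l\<close>, \<open>(2d - 1) + l\<close> and \<open>2(2d - 1) + l\<close>
  measure \<open>|a|\<^sup>2\<close>, \<open>|a - b|\<^sup>2\<close> and \<open>|a - \<i>b|\<^sup>2\<close>; with the interpolated \<open>|b|\<^sup>2\<close> they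
  determine \<open>a \<cdot> conj b\<close> by polarization.\<close>
definition cross_sample :: "nat \<Rightarrow> (nat \<Rightarrow> real) \<Rightarrow> nat \<Rightarrow> complex" where
  "cross_sample d y l = complex_of_real ((y l + sq_est d y (omg d ^ l * nu d) - y (2*d-1+l)) / 2)
     + \<i> * complex_of_real ((y l + sq_est d y (omg d ^ l * nu d) - y (2*(2*d-1)+l)) / 2)"

definition cross_est :: "nat \<Rightarrow> (nat \<Rightarrow> real) \<Rightarrow> complex \<Rightarrow> complex" where
  "cross_est d y z = (\<Sum>l\<in>{1..2*d-1}. cross_sample d y l * dirichlet d (z * cnj (omg d ^ l))) / of_nat (2*d-1)"

lemma norm_dirichlet_average_le:
  assumes "d \<ge> 1" "cmod z = 1" "\<And>l. l \<in> {1..2*d-1} \<Longrightarrow> cmod (c l) \<le> E"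
  shows "cmod ((\<Sum>l\<in>{1..2*d-1}. c l * dirichlet d (z * cnj (omg d ^ l))) / of_nat (2*d-1)) \<le> real (2*d-1) * E"
proof -
  define N where "N = 2*d-1"
  have N0: "real N > 0" using assms(1) by (simp add: N_def)
  have "1 \<in> {1..N}" using assms(1) by (simp add: N_def)
  then have E: "0 \<le> E" using assms(3) norm_ge_zero order_trans unfolding N_def by blast
  have "cmod (c l * dirichlet d (z * cnj (omg d ^ l))) \<le> E * real N" if l: "l \<in> {1..N}" for l
  proof -
    have "cmod (z * cnj (omg d ^ l)) = 1" using assms(2) by (simp add: norm_mult norm_power)
    then have "cmod (dirichlet d (z * cnj (omg d ^ l))) \<le> real N" unfolding N_def by (rule norm_dirichlet_le)
    then show ?thesis unfolding norm_mult using assms(3) l E by (intro mult_mono) (auto simp: N_def)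
  qed
  then have "cmod (\<Sum>l\<in>{1..N}. c l * dirichlet d (z * cnj (omg d ^ l))) \<le> (\<Sum>l\<in>{1..N}. E * real N)"
    by (intro order_trans[OF norm_sum] sum_mono)
  then have "cmod (\<Sum>l\<in>{1..N}. c l * dirichlet d (z * cnj (omg d ^ l))) \<le> real N * (E * real N)" by simp
  then show ?thesis using N0 unfolding N_def[symmetric] by (simp add: norm_divide pos_divide_le_eq)
qed

lemma sq_est_error:
  assumes d: "d \<ge> 1" and dp: "degree p < d" and z: "cmod z = 1"
    and err: "\<And>l. l \<in> {1..2*d-1} \<Longrightarrow> \<bar>y l - meas d p l\<bar> \<le> e"
  shows "\<bar>sq_est d y z - (cmod (poly p z))\<^sup>2\<bar> \<le> real (2*d-1) * e"
proof -
  define N where "N = 2*d-1"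
  have m: "complex_of_real (meas d p l) = poly p (omg d ^ l) * cnj (poly p (omg d ^ l))" if "l \<in> {1..N}" for l
  proof -
    have "meas d p l = (cmod (poly p (omg d ^ l)))\<^sup>2" using that by (simp add: meas_def N_def)
    then show ?thesis by (simp only: complex_norm_square)
  qed
  have "(\<Sum>l\<in>{1..N}. complex_of_real (meas d p l) * dirichlet d (z * cnj (omg d ^ l)))
      = (\<Sum>l\<in>{1..N}. poly p (omg d ^ l) * cnj (poly p (omg d ^ l)) * dirichlet d (z * cnj (omg d ^ l)))"
    by (rule sum.cong) (simp_all add: m)
  also have "\<dots> = (\<Sum>l<N. poly p (omg d ^ l) * cnj (poly p (omg d ^ l)) * dirichlet d (z * cnj (omg d ^ l)))"
    unfolding N_def by (rule sum_omg_power_atLeast1[OF d, where h="\<lambda>w. poly p w * cnj (poly p w) * dirichlet d (z * cnj w)"])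
  finally have "complex_of_real ((cmod (poly p z))\<^sup>2)
      = (\<Sum>l\<in>{1..N}. complex_of_real (meas d p l) * dirichlet d (z * cnj (omg d ^ l))) / of_nat N"
    unfolding complex_norm_square interpolation_mult_cnj[OF d dp dp z] N_def by simp
  then have "(cmod (poly p z))\<^sup>2
      = Re ((\<Sum>l\<in>{1..N}. complex_of_real (meas d p l) * dirichlet d (z * cnj (omg d ^ l))) / of_nat N)"
    by (metis Re_complex_of_real)
  then have "sq_est d y z - (cmod (poly p z))\<^sup>2
      = Re ((\<Sum>l\<in>{1..N}. complex_of_real (y l - meas d p l) * dirichlet d (z * cnj (omg d ^ l))) / of_nat N)"
    unfolding sq_est_def N_def[symmetric] by (simp add: sum_subtractf left_diff_distrib diff_divide_distrib)
  also have "\<bar>\<dots>\<bar> \<le> real N * e"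
    using norm_dirichlet_average_le[OF d z, of "\<lambda>l. complex_of_real (y l - meas d p l)" e] err
    unfolding N_def by (intro order_trans[OF abs_Re_le_cmod]) (simp del: of_real_diff)
  finally show ?thesis by (simp add: N_def)
qed

lemma polarization:
  fixes a b :: complex
  shows "a * cnj b = complex_of_real (((cmod a)\<^sup>2 + (cmod b)\<^sup>2 - (cmod (a - b))\<^sup>2) / 2)
           + \<i> * complex_of_real (((cmod a)\<^sup>2 + (cmod b)\<^sup>2 - (cmod (a - \<i> * b))\<^sup>2) / 2)"
  by (simp only: cmod_power2) (simp add: complex_eq_iff power2_eq_square algebra_simps)

lemma meas_shifted:
  assumes d: "d \<ge> 1" and l: "l \<in> {1..2*d-1}"
  shows "meas d p l = (cmod (poly p (omg d ^ l)))\<^sup>2"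
    and "meas d p ((2*d-1) + l) = (cmod (poly p (omg d ^ l) - poly p (omg d ^ l * nu d)))\<^sup>2"
    and "meas d p (2*(2*d-1) + l) = (cmod (poly p (omg d ^ l) - \<i> * poly p (omg d ^ l * nu d)))\<^sup>2"
proof -
  define N where "N = 2*d-1"
  have l1: "1 \<le> l" "l \<le> N" using l by (auto simp: N_def)
  then show "meas d p l = (cmod (poly p (omg d ^ l)))\<^sup>2" by (simp add: meas_def N_def)
  have w: "omg d ^ (m*N + l) = omg d ^ l" for m using omg_power_period[OF d] by (simp add: N_def)
  have "(1 \<le> N+l \<and> N+l \<le> 2*d-1) = False" "(2*d \<le> N+l \<and> N+l \<le> 4*d-2) = True"
    using l1 d by (auto simp: N_def)
  then show "meas d p (N + l) = (cmod (poly p (omg d ^ l) - poly p (omg d ^ l * nu d)))\<^sup>2"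
    unfolding meas_def using w[of 1] by (simp only: if_False if_True mult_1)
  have "(1 \<le> 2*N+l \<and> 2*N+l \<le> 2*d-1) = False" "(2*d \<le> 2*N+l \<and> 2*N+l \<le> 4*d-2) = False"
    "(4*d-1 \<le> 2*N+l \<and> 2*N+l \<le> 6*d-3) = True" using l1 d by (auto simp: N_def)
  then show "meas d p (2*N + l) = (cmod (poly p (omg d ^ l) - \<i> * poly p (omg d ^ l * nu d)))\<^sup>2"
    unfolding meas_def using w[of 2] by (simp only: if_False if_True)
qed

lemma cross_sample_error:
  assumes d: "d \<ge> 1" and dp: "degree p < d" and l: "l \<in> {1..2*d-1}"
    and err: "\<And>l. l \<in> {1..3*(2*d-1)} \<Longrightarrow> \<bar>y l - meas d p l\<bar> \<le> e"
  shows "cmod (cross_sample d y l - poly p (omg d ^ l) * cnj (poly p (omg d ^ l * nu d))) \<le> real (2*d-1+2) * e"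
proof -
  define N where "N = 2*d-1"
  define a where "a = poly p (omg d ^ l)"
  define b where "b = poly p (omg d ^ l * nu d)"
  have l1: "1 \<le> l" "l \<le> N" using l by (auto simp: N_def)
  note m1 = meas_shifted(1)[OF d l, of p, folded a_def]
  note m2 = meas_shifted(2)[OF d l, of p, folded a_def b_def N_def]
  note m3 = meas_shifted(3)[OF d l, of p, folded a_def b_def N_def]
  have e1: "\<bar>y l - (cmod a)\<^sup>2\<bar> \<le> e" using err[of l] l1 m1 by (auto simp: N_def)
  have e2: "\<bar>y (N+l) - (cmod (a - b))\<^sup>2\<bar> \<le> e" using err[of "N+l"] l1 m2 by (auto simp: N_def)
  have e3: "\<bar>y (2*N+l) - (cmod (a - \<i> * b))\<^sup>2\<bar> \<le> e" using err[of "2*N+l"] l1 m3 by (auto simp: N_def)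
  have e4: "\<bar>sq_est d y (omg d ^ l * nu d) - (cmod b)\<^sup>2\<bar> \<le> real N * e"
    unfolding b_def N_def using err by (intro sq_est_error[OF d dp]) (auto simp: norm_mult norm_power)
  define A where "A = (y l + sq_est d y (omg d ^ l * nu d) - y (N+l)) / 2 - ((cmod a)\<^sup>2 + (cmod b)\<^sup>2 - (cmod (a - b))\<^sup>2) / 2"
  define B where "B = (y l + sq_est d y (omg d ^ l * nu d) - y (2*N+l)) / 2 - ((cmod a)\<^sup>2 + (cmod b)\<^sup>2 - (cmod (a - \<i> * b))\<^sup>2) / 2"
  have half: "\<bar>(u1 + u3 - u2) / 2\<bar> \<le> (real N * e + 2 * e) / 2"
    if "\<bar>u1\<bar> \<le> e" "\<bar>u2\<bar> \<le> e" "\<bar>u3\<bar> \<le> real N * e" for u1 u2 u3 :: real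
    using that by (simp add: abs_le_iff)
  have "A = ((y l - (cmod a)\<^sup>2) + (sq_est d y (omg d ^ l * nu d) - (cmod b)\<^sup>2) - (y (N+l) - (cmod (a - b))\<^sup>2)) / 2"
    "B = ((y l - (cmod a)\<^sup>2) + (sq_est d y (omg d ^ l * nu d) - (cmod b)\<^sup>2) - (y (2*N+l) - (cmod (a - \<i> * b))\<^sup>2)) / 2"
    unfolding A_def B_def by (simp_all add: field_simps)
  then have "\<bar>A\<bar> \<le> (real N * e + 2 * e) / 2" "\<bar>B\<bar> \<le> (real N * e + 2 * e) / 2"
    using half[OF e1 e2 e4] half[OF e1 e3 e4] by simp_all
  moreover have "cross_sample d y l - a * cnj b = complex_of_real A + \<i> * complex_of_real B"
    unfolding cross_sample_def polarization[of a b] A_def B_def N_def[symmetric] by (simp add: algebra_simps)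
  moreover have "cmod (complex_of_real A + \<i> * complex_of_real B) \<le> \<bar>A\<bar> + \<bar>B\<bar>"
    using cmod_le[of "complex_of_real A + \<i> * complex_of_real B"] by simp
  ultimately show ?thesis by (simp add: a_def b_def N_def algebra_simps)
qed

lemma cross_est_error:
  assumes d: "d \<ge> 1" and dp: "degree p < d" and z: "cmod z = 1"
    and err: "\<And>l. l \<in> {1..3*(2*d-1)} \<Longrightarrow> \<bar>y l - meas d p l\<bar> \<le> e"
  shows "cmod (cross_est d y z - poly p z * cnj (poly p (z * nu d))) \<le> real (2*d-1) * (real (2*d-1+2) * e)"
proof -
  define N where "N = 2*d-1"
  define g where "g = pcompose p [:0, nu d:]"
  have pg: "poly g x = poly p (x * nu d)" for x by (simp add: g_def poly_pcompose)
  have "degree g \<le> degree p * degree [:0, nu d:]" unfolding g_def by (rule degree_pcompose_le)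
  also have "\<dots> \<le> degree p" by (cases "nu d = 0") simp_all
  finally have "degree g \<le> degree p" .
  then have dg: "degree g < d" using dp by simp
  have "poly p z * cnj (poly p (z * nu d))
      = (\<Sum>l\<in>{1..N}. poly p (omg d ^ l) * cnj (poly p (omg d ^ l * nu d)) * dirichlet d (z * cnj (omg d ^ l))) / of_nat N"
    using interpolation_mult_cnj[OF d dp dg z]
      sum_omg_power_atLeast1[OF d, where h="\<lambda>w. poly p w * cnj (poly g w) * dirichlet d (z * cnj w)"]
    by (simp add: pg N_def)
  then have "cross_est d y z - poly p z * cnj (poly p (z * nu d))
     = (\<Sum>l\<in>{1..N}. (cross_sample d y l - poly p (omg d ^ l) * cnj (poly p (omg d ^ l * nu d)))
          * dirichlet d (z * cnj (omg d ^ l))) / of_nat N"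
    unfolding cross_est_def N_def[symmetric] by (simp add: sum_subtractf left_diff_distrib diff_divide_distrib)
  also have "cmod \<dots> \<le> real N * (real (2*d-1+2) * e)"
    unfolding N_def using cross_sample_error[OF d dp _ err] by (intro norm_dirichlet_average_le[OF d z])
  finally show ?thesis by (simp add: N_def)
qed


section \<open>The reconstruction map\<close>

lemma norm_sgn_diff_le:
  fixes x y :: complex
  assumes "y \<noteq> 0"
  shows "cmod (sgn x - sgn y) \<le> 2 * cmod (x - y) / cmod y"
proof (cases "x = 0")
  case False
  have ny: "cmod y > 0" using assms by simp
  have "sgn x - sgn y = of_real ((cmod y - cmod x) / cmod y) * sgn x + (x - y) / of_real (cmod y)"
    using False ny by (simp add: Complex.sgn_eq field_simps)
  then have "cmod (sgn x - sgn y) \<le> \<bar>cmod y - cmod x\<bar> / cmod y + cmod (x - y) / cmod y"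
    using False ny norm_triangle_ineq[of "of_real ((cmod y - cmod x) / cmod y) * sgn x" "(x - y) / of_real (cmod y)"]
    by (simp add: norm_mult norm_sgn norm_divide del: of_real_diff)
  also have "\<bar>cmod y - cmod x\<bar> / cmod y \<le> cmod (x - y) / cmod y"
    using ny by (intro divide_right_mono) (auto simp: norm_minus_commute[of x] norm_triangle_ineq3)
  finally show ?thesis by simp
qed (use assms in \<open>simp add: norm_sgn\<close>)

lemma sqrt_max_error:
  fixes x t :: real
  assumes t: "t > 0"
  shows "\<bar>sqrt (max 0 x) - t\<bar> \<le> \<bar>x - t\<^sup>2\<bar> / t"
proof (cases "x \<le> 0")
  case True
  then show ?thesis using t by (simp add: power2_eq_square field_simps)
next
  case False
  have "(sqrt x - t) * (sqrt x + t) = x - t\<^sup>2"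
    using False by (simp add: algebra_simps power2_eq_square)
  moreover have "\<bar>sqrt x + t\<bar> = sqrt x + t" using t False by simp
  ultimately have "\<bar>sqrt x - t\<bar> * (sqrt x + t) = \<bar>x - t\<^sup>2\<bar>"
    by (metis abs_mult)
  moreover have "\<bar>sqrt x - t\<bar> * t \<le> \<bar>sqrt x - t\<bar> * (sqrt x + t)"
    using False by (intro mult_left_mono) auto
  ultimately show ?thesis using False t by (simp add: pos_le_divide_eq)
qed

definition orbit_score :: "nat \<Rightarrow> (nat \<Rightarrow> real) \<Rightarrow> nat \<Rightarrow> real" where
  "orbit_score d y j = Min ((\<lambda>k. sq_est d y (grid d j k)) ` {..<d})"

definition best_orbit :: "nat \<Rightarrow> (nat \<Rightarrow> real) \<Rightarrow> nat" where
  "best_orbit d y = (SOME j. j \<in> {1..2*d-1} \<and> (\<forall>j'\<in>{1..2*d-1}. orbit_score d y j' \<le> orbit_score d y j))"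

fun phase_est :: "nat \<Rightarrow> (nat \<Rightarrow> real) \<Rightarrow> nat \<Rightarrow> complex" where
  "phase_est d y 0 = 1"
| "phase_est d y (Suc k) = phase_est d y k * sgn (cnj (cross_est d y (grid d (best_orbit d y) k)))"

definition value_est :: "nat \<Rightarrow> (nat \<Rightarrow> real) \<Rightarrow> nat \<Rightarrow> complex" where
  "value_est d y k = complex_of_real (sqrt (max 0 (sq_est d y (grid d (best_orbit d y) k)))) * phase_est d y k"

definition coeff_est :: "nat \<Rightarrow> (nat \<Rightarrow> real) \<Rightarrow> nat \<Rightarrow> complex" where
  "coeff_est d y b = (\<Sum>k<d. value_est d y k * cnj (grid d (best_orbit d y) k) ^ b) / of_nat d"

definition reconstruct :: "nat \<Rightarrow> (nat \<Rightarrow> real) \<Rightarrow> complex poly" where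
  "reconstruct d y = (\<Sum>b<d. monom (coeff_est d y b) b)"

lemma orbit_score_le_best_orbit:
  assumes "d \<ge> 1" "j \<in> {1..2*d-1}"
  shows "orbit_score d y j \<le> orbit_score d y (best_orbit d y)"
proof -
  have fin: "finite (orbit_score d y ` {1..2*d-1})" by simp
  have ne: "orbit_score d y ` {1..2*d-1} \<noteq> {}" using assms by auto
  obtain j0 where j0: "j0 \<in> {1..2*d-1}" "orbit_score d y j0 = Max (orbit_score d y ` {1..2*d-1})"
    using Max_in[OF fin ne] by auto
  then have "\<exists>j. j \<in> {1..2*d-1} \<and> (\<forall>j'\<in>{1..2*d-1}. orbit_score d y j' \<le> orbit_score d y j)"
    using fin by auto
  then have "\<forall>j'\<in>{1..2*d-1}. orbit_score d y j' \<le> orbit_score d y (best_orbit d y)"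
    unfolding best_orbit_def by (rule someI2_ex) blast
  then show ?thesis using assms(2) by blast
qed

lemma coeff_reconstruct: "coeff (reconstruct d y) n = (if n < d then coeff_est d y n else 0)"
  unfolding reconstruct_def coeff_sum by (simp add: sum.delta' lessThan_def)

lemma degree_reconstruct: "d \<ge> 1 \<Longrightarrow> degree (reconstruct d y) < d"
  using degree_le[of "d - 1" "reconstruct d y"] by (force simp: coeff_reconstruct)

lemma norm_phase_est_le: "cmod (phase_est d y k) \<le> 1"
proof (induction k)
  case (Suc k)
  then show ?case by (simp add: norm_mult norm_sgn mult_le_one)
qed simp


section \<open>Error analysis\<close>

locale noisy_measurements =
  fixes d :: nat and p :: "complex poly" and y :: "nat \<Rightarrow> real" and e :: real
  assumes d2: "d \<ge> 2" and degree_p: "degree p < d" and p_nonzero: "p \<noteq> 0"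
    and measurement_error: "\<And>l. l \<in> {1..3*(2*d-1)} \<Longrightarrow> \<bar>y l - meas d p l\<bar> \<le> e"
    and small_noise: "real (2*d-1) * e \<le> (beta d * pnorm p)\<^sup>2"
begin

abbreviation sample :: "nat \<Rightarrow> complex" where
  "sample k \<equiv> poly p (grid d (best_orbit d y) k)"

lemma one_le_d: "d \<ge> 1"
  using d2 by simp

lemma error_nonneg: "0 \<le> e"
  using measurement_error[of 1] d2 by fastforce

lemma sq_est_close: "cmod z = 1 \<Longrightarrow> \<bar>sq_est d y z - (cmod (poly p z))\<^sup>2\<bar> \<le> real (2*d-1) * e"
  using measurement_error by (intro sq_est_error[OF one_le_d degree_p]) auto

text \<open>The selected orbit scores at least as well as an orbit far from the roots, where
  \<open>|p| \<ge> 2\<beta>\<parallel>p\<parallel>\<close>; the two estimation errors cost at most \<open>2(2d - 1)e \<le> 2\<beta>\<^sup>2\<parallel>p\<parallel>\<^sup>2\<close>.\<close>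
lemma sample_sq_lower: "k < d \<Longrightarrow> 2 * (beta d * pnorm p)\<^sup>2 \<le> (cmod (sample k))\<^sup>2"
proof -
  assume k: "k < d"
  define N where "N = 2*d-1"
  define \<gamma> where "\<gamma> = (sin (pi / real (d*(2*d-1))) / 4) ^ (d-1)"
  define j0 where "j0 = best_orbit d y"
  have bg: "2 * beta d \<le> \<gamma>" using beta_le_orbit_bound[OF d2] by (simp add: \<gamma>_def)
  have bP: "0 \<le> beta d * pnorm p" using beta_pos[OF d2] pnorm_nonneg by simp
  obtain j where j: "j \<in> {1..N}" and far: "\<forall>k<d. \<gamma> * pnorm p \<le> cmod (poly p (grid d j k))"
    using exists_orbit_lower_bound[OF d2 p_nonzero degree_p] unfolding \<gamma>_def[symmetric] N_def by blast
  have fin: "finite ((\<lambda>k. sq_est d y (grid d j k)) ` {..<d})" for j by simp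
  have "0 \<in> {..<d}" using d2 by simp
  then have ne: "(\<lambda>k. sq_est d y (grid d j k)) ` {..<d} \<noteq> {}" for j by blast
  have "(\<gamma> * pnorm p)\<^sup>2 - real N * e \<le> orbit_score d y j"
    unfolding orbit_score_def
  proof (subst Min_ge_iff[OF fin ne], intro ballI)
    fix x assume "x \<in> (\<lambda>k. sq_est d y (grid d j k)) ` {..<d}"
    then obtain k where k: "k < d" and x: "x = sq_est d y (grid d j k)" by auto
    have "(\<gamma> * pnorm p)\<^sup>2 \<le> (cmod (poly p (grid d j k)))\<^sup>2"
      using far k bg beta_pos[OF d2] pnorm_nonneg[of p] by (intro power_mono) auto
    then show "(\<gamma> * pnorm p)\<^sup>2 - real N * e \<le> x"
      using sq_est_close[OF norm_grid, of d j k] unfolding x N_def by linarith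
  qed
  also have "\<dots> \<le> orbit_score d y j0"
    using orbit_score_le_best_orbit[OF one_le_d j[unfolded N_def]] by (simp add: j0_def)
  also have "\<dots> \<le> sq_est d y (grid d j0 k)"
    unfolding orbit_score_def using k by (intro Min_le) auto
  finally have "(\<gamma> * pnorm p)\<^sup>2 - 2 * (real N * e) \<le> (cmod (sample k))\<^sup>2"
    using sq_est_close[OF norm_grid, of d j0 k] unfolding j0_def N_def by linarith
  moreover have "(2 * (beta d * pnorm p))\<^sup>2 \<le> (\<gamma> * pnorm p)\<^sup>2"
    using mult_right_mono[OF bg pnorm_nonneg[of p]] bP by (intro power_mono) (auto simp: mult.assoc)
  ultimately show ?thesis using small_noise by (simp add: N_def power_mult_distrib)
qed

lemma sample_lower:
  assumes "k < d"
  shows "beta d * pnorm p \<le> cmod (sample k)"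
proof (rule power2_le_imp_le)
  show "(beta d * pnorm p)\<^sup>2 \<le> (cmod (sample k))\<^sup>2"
    using sample_sq_lower[OF assms] zero_le_power2[of "beta d * pnorm p"] by linarith
qed simp

lemma sample_nonzero:
  assumes "k < d"
  shows "sample k \<noteq> 0"
proof -
  have "0 < beta d * pnorm p" using beta_pos[OF d2] pnorm_pos[OF p_nonzero] by simp
  then show ?thesis using sample_lower[OF assms] by auto
qed

lemma modulus_error:
  assumes "k < d"
  shows "\<bar>sqrt (max 0 (sq_est d y (grid d (best_orbit d y) k))) - cmod (sample k)\<bar>
    \<le> real (2*d-1) * e / (beta d * pnorm p)"
proof -
  have "0 < cmod (sample k)" using sample_nonzero[OF assms] by simp
  then have "\<bar>sqrt (max 0 (sq_est d y (grid d (best_orbit d y) k))) - cmod (sample k)\<bar>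
      \<le> \<bar>sq_est d y (grid d (best_orbit d y) k) - (cmod (sample k))\<^sup>2\<bar> / cmod (sample k)"
    by (rule sqrt_max_error)
  also have "\<dots> \<le> real (2*d-1) * e / (beta d * pnorm p)"
    using sq_est_close[OF norm_grid] sample_lower[OF assms] beta_pos[OF d2] pnorm_pos[OF p_nonzero] error_nonneg
    by (intro frac_le) auto
  finally show ?thesis .
qed

lemma cross_direction_error:
  assumes k: "Suc k < d"
  shows "cmod (sgn (cross_est d y (grid d (best_orbit d y) k)) - sgn (sample k * cnj (sample (Suc k))))
    \<le> real (2*d-1) * (real (2*d-1) + 2) * e / (beta d * pnorm p)\<^sup>2"
proof -
  define N where "N = 2*d-1"
  define q where "q = sample k * cnj (sample (Suc k))"
  have "cmod (cross_est d y (grid d (best_orbit d y) k) - q) \<le> real N * (real N + 2) * e"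
    using cross_est_error[OF one_le_d degree_p norm_grid[of d "best_orbit d y" k] measurement_error]
    unfolding grid_Suc by (simp add: q_def N_def mult.assoc add.commute)
  moreover have "2 * (beta d * pnorm p)\<^sup>2 \<le> cmod q"
  proof (rule power2_le_imp_le)
    have "(2 * (beta d * pnorm p)\<^sup>2) * (2 * (beta d * pnorm p)\<^sup>2) \<le> (cmod (sample k))\<^sup>2 * (cmod (sample (Suc k)))\<^sup>2"
      using sample_sq_lower k by (intro mult_mono) auto
    then have "(2 * (beta d * pnorm p)\<^sup>2)\<^sup>2 \<le> (cmod (sample k))\<^sup>2 * (cmod (sample (Suc k)))\<^sup>2"
      by (simp only: power2_eq_square[of "2 * (beta d * pnorm p)\<^sup>2"])
    also have "\<dots> = (cmod q)\<^sup>2" by (simp add: q_def norm_mult power_mult_distrib)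
    finally show "(2 * (beta d * pnorm p)\<^sup>2)\<^sup>2 \<le> (cmod q)\<^sup>2" .
  qed simp
  moreover have "q \<noteq> 0" using sample_nonzero k by (simp add: q_def)
  ultimately have "cmod (sgn (cross_est d y (grid d (best_orbit d y) k)) - sgn q)
      \<le> 2 * (real N * (real N + 2) * e) / (2 * (beta d * pnorm p)\<^sup>2)"
    using beta_pos[OF d2] pnorm_pos[OF p_nonzero] error_nonneg
    by (intro order_trans[OF norm_sgn_diff_le frac_le]) auto
  then show ?thesis by (simp add: q_def N_def)
qed

text \<open>Each propagation step adds at most the error of the estimated direction of
  \<open>p(z) \<cdot> conj (p(z\<nu>))\<close>.\<close>
lemma phase_error:
  assumes "k < d"
  shows "cmod (phase_est d y k - cnj (sgn (sample 0)) * sgn (sample k))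
    \<le> real k * (real (2*d-1) * (real (2*d-1) + 2) * e / (beta d * pnorm p)\<^sup>2)"
  using assms
proof (induction k)
  case 0
  then show ?case using sample_nonzero[of 0] by (simp add: sgn_mult_cnj_sgn mult.commute)
next
  case (Suc k)
  define X where "X = real (2*d-1) * (real (2*d-1) + 2) * e / (beta d * pnorm p)\<^sup>2"
  define Q where "Q = cross_est d y (grid d (best_orbit d y) k)"
  define q where "q = sample k * cnj (sample (Suc k))"
  define c where "c = cnj (sgn (sample 0))"
  have k: "k < d" using Suc.prems by simp
  have "sgn (sample k) * sgn (cnj q) = (sgn (sample k) * cnj (sgn (sample k))) * sgn (sample (Suc k))"
    by (simp add: q_def sgn_mult sgn_cnj mult.assoc)
  then have "sgn (sample (Suc k)) = sgn (sample k) * sgn (cnj q)"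
    using sample_nonzero[OF k] by (simp add: sgn_mult_cnj_sgn)
  then have "phase_est d y (Suc k) - c * sgn (sample (Suc k))
      = (phase_est d y k - c * sgn (sample k)) * sgn (cnj Q) + c * sgn (sample k) * (sgn (cnj Q) - sgn (cnj q))"
    by (simp add: Q_def algebra_simps)
  then have "cmod (phase_est d y (Suc k) - c * sgn (sample (Suc k)))
      \<le> cmod (phase_est d y k - c * sgn (sample k)) * cmod (sgn (cnj Q))
        + cmod (c * sgn (sample k)) * cmod (sgn (cnj Q) - sgn (cnj q))"
    by (metis norm_triangle_ineq norm_mult)
  also have "cmod (sgn (cnj Q) - sgn (cnj q)) = cmod (sgn Q - sgn q)"
    by (metis sgn_cnj complex_cnj_diff complex_mod_cnj)
  also have "cmod (c * sgn (sample k)) = 1"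
    using sample_nonzero[OF k] sample_nonzero[of 0] d2 by (simp add: c_def norm_mult norm_sgn)
  also have "cmod (phase_est d y k - c * sgn (sample k)) * cmod (sgn (cnj Q)) \<le> real k * X * 1"
  proof (intro mult_mono)
    show "cmod (phase_est d y k - c * sgn (sample k)) \<le> real k * X"
      using Suc.IH[OF k] by (simp add: c_def X_def)
  qed (use error_nonneg in \<open>auto simp: norm_sgn X_def\<close>)
  also have "real k * X * 1 + 1 * cmod (sgn Q - sgn q) \<le> real (Suc k) * X"
    using cross_direction_error[OF Suc.prems] unfolding Q_def[symmetric] q_def[symmetric] X_def[symmetric]
    by (simp add: algebra_simps)
  finally show ?case by (simp only: c_def X_def)
qed

lemma value_error:
  assumes k: "k < d"
  shows "cmod (value_est d y k - cnj (sgn (sample 0)) * sample k)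
    \<le> real (2*d-1) * e / (beta d * pnorm p)
      + real d * pnorm p * (real (d-1) * (real (2*d-1) * (real (2*d-1) + 2) * e / (beta d * pnorm p)\<^sup>2))"
proof -
  define c where "c = cnj (sgn (sample 0))"
  define s where "s = sqrt (max 0 (sq_est d y (grid d (best_orbit d y) k)))"
  have polar: "complex_of_real (cmod (sample k)) * sgn (sample k) = sample k"
    by (simp add: Complex.sgn_eq)
  have "complex_of_real (s - cmod (sample k)) * phase_est d y k
        + complex_of_real (cmod (sample k)) * (phase_est d y k - c * sgn (sample k))
      = complex_of_real s * phase_est d y k - c * (complex_of_real (cmod (sample k)) * sgn (sample k))"
    by (simp add: algebra_simps)
  then have "value_est d y k - c * sample k
      = complex_of_real (s - cmod (sample k)) * phase_est d y k
        + complex_of_real (cmod (sample k)) * (phase_est d y k - c * sgn (sample k))"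
    unfolding polar value_est_def s_def by simp
  then have "cmod (value_est d y k - c * sample k)
      \<le> \<bar>s - cmod (sample k)\<bar> * cmod (phase_est d y k) + cmod (sample k) * cmod (phase_est d y k - c * sgn (sample k))"
    by (metis (no_types, lifting) norm_triangle_ineq norm_mult norm_of_real abs_norm_cancel)
  also have "\<dots> \<le> real (2*d-1) * e / (beta d * pnorm p) * 1
      + real d * pnorm p * (real (d-1) * (real (2*d-1) * (real (2*d-1) + 2) * e / (beta d * pnorm p)\<^sup>2))"
  proof (intro add_mono mult_mono)
    show "\<bar>s - cmod (sample k)\<bar> \<le> real (2*d-1) * e / (beta d * pnorm p)"
      unfolding s_def by (rule modulus_error[OF k])
    show "cmod (sample k) \<le> real d * pnorm p"
      by (rule norm_poly_le_on_circle[OF degree_p norm_grid])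
    show "cmod (phase_est d y k - c * sgn (sample k))
        \<le> real (d-1) * (real (2*d-1) * (real (2*d-1) + 2) * e / (beta d * pnorm p)\<^sup>2)"
      unfolding c_def using phase_error[OF k] k error_nonneg
      by (elim order_trans) (intro mult_right_mono, auto)
  qed (use error_nonneg norm_phase_est_le pnorm_nonneg[of p] beta_pos[OF d2] in auto)
  finally show ?thesis by (simp add: c_def)
qed

lemma reconstruction_error:
  "rho p (reconstruct d y) \<le> sqrt (real d) * ((e / pnorm p) * (real (2*d-1) / beta d
     + real d * (real d - 1) * real (2*d-1) * (real (2*d-1) + 2) / (beta d)\<^sup>2))"
proof -
  define c where "c = cnj (sgn (sample 0))"
  define E where "E = real (2*d-1) * e / (beta d * pnorm p)
      + real d * pnorm p * (real (d-1) * (real (2*d-1) * (real (2*d-1) + 2) * e / (beta d * pnorm p)\<^sup>2))"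
  have c1: "cmod c = 1" using sample_nonzero[of 0] d2 by (simp add: c_def norm_sgn)
  then have cc: "cnj c * c = 1" by (metis complex_norm_square mult.commute of_real_1 power_one)
  have coeff_err: "cmod (coeff (reconstruct d y - smult c p) i) \<le> E" if i: "i < d" for i
    using i dft_coeff_error[OF one_le_d degree_p _ i, of "omg d ^ best_orbit d y" "value_est d y" c E]
      value_error[folded c_def E_def]
    by (simp add: coeff_reconstruct coeff_est_def grid_def norm_mult norm_power)
  have deg: "degree (reconstruct d y - smult c p) < d"
    using degree_reconstruct[OF one_le_d, of y] degree_smult_le[of c p] degree_p by (intro degree_diff_less) auto
  have "pnorm (reconstruct d y - smult c p) \<le> sqrt (\<Sum>i<d. E\<^sup>2)"
    unfolding pnorm_eq_sum_lessThan[OF deg] using coeff_err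
    by (intro real_sqrt_le_mono sum_mono power_mono) auto
  also have "\<dots> = sqrt (real d) * E"
    using coeff_err[of 0] d2 by (simp add: real_sqrt_mult order_trans[OF norm_ge_zero])
  finally have "pnorm (p - smult (cnj c) (reconstruct d y)) \<le> sqrt (real d) * E"
    using c1 pnorm_smult[of "cnj c" "smult c p - reconstruct d y"] pnorm_minus_commute[of "reconstruct d y"]
    by (simp add: smult_diff_right cc)
  then have "rho p (reconstruct d y) \<le> sqrt (real d) * E"
    using rho_le_pnorm[of "cnj c" p "reconstruct d y"] c1 by simp
  also have "E = (e / pnorm p) * (real (2*d-1) / beta d
      + real d * (real d - 1) * real (2*d-1) * (real (2*d-1) + 2) / (beta d)\<^sup>2)"
    unfolding E_def using beta_pos[OF d2] pnorm_pos[OF p_nonzero] d2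
    by (simp add: field_simps power2_eq_square of_nat_diff)
  finally show ?thesis .
qed

end


section \<open>Comparison with the stated bound\<close>

lemma reconstruction_factor_le:
  fixes b D G :: real
  assumes D2: "D \<ge> 2" and G: "G = 2 * D - 1" and b0: "0 < b" and b1: "b \<le> 1 / (2 * D * G)"
  shows "sqrt D * (G / b + D * (D - 1) * G * (G + 2) / b\<^sup>2) \<le> D ^ 2 * G / (2 * b ^ 3)"
proof -
  have G3: "G \<ge> 3" using G D2 by simp
  have "2 * 3 \<le> D * G" using D2 G3 by (intro mult_mono) auto
  then have "1 / (2 * D * G) \<le> 1 / 12" by (intro divide_left_mono) (auto simp: mult.assoc)
  then have bb: "b\<^sup>2 \<le> 1/144" using b0 b1 power_mono[of b "1/12" 2] by (simp add: power2_eq_square)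
  have "D * (D - 1) * (G + 2) * b \<le> D * (D - 1) * (G + 2) * (1 / (2 * D * G))"
    using b1 D2 G3 by (intro mult_left_mono) auto
  also have "\<dots> = (D * G - 1) / (2 * G)" using D2 G3 by (simp add: G field_simps)
  also have "\<dots> \<le> D / 2" using G3 by (simp add: field_simps)
  finally have t1: "D * (D - 1) * (G + 2) * b \<le> D / 2" .
  have "0 \<le> D * (D - 2)" using D2 by simp
  then have "D \<le> (D - 1/2)\<^sup>2" by (simp add: power2_eq_square algebra_simps)
  then have sq: "sqrt D \<le> D - 1/2" using D2 real_sqrt_le_mono[of D "(D - 1/2)\<^sup>2"] by simp
  define S where "S = b\<^sup>2 + D * (D - 1) * (G + 2) * b"
  have "S \<le> 1/144 + D/2" using bb t1 unfolding S_def by linarith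
  moreover have "0 \<le> S" using b0 D2 G3 by (simp add: S_def)
  ultimately have "sqrt D * S \<le> (D - 1/2) * (1/144 + D/2)"
    using sq D2 by (intro mult_mono) auto
  also have "\<dots> \<le> D^2 / 2" using D2 by (simp add: power2_eq_square algebra_simps)
  finally have key: "sqrt D * S \<le> D^2 / 2" .
  have "sqrt D * (G / b + D * (D - 1) * G * (G + 2) / b\<^sup>2) = (G / b^3) * (sqrt D * S)"
    unfolding S_def using b0 by (simp add: field_simps power2_eq_square power3_eq_cube)
  also have "\<dots> \<le> (G / b^3) * (D^2 / 2)" using key G3 b0 by (intro mult_left_mono) auto
  also have "\<dots> = D ^ 2 * G / (2 * b ^ 3)" by (simp add: mult.commute)
  finally show ?thesis .
qed

text \<open>Here \<open>C > 1\<close>, so both summands of the first factor are multiplied by a negative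
  number; the first product is nonnegative and the second one dominates by Bernoulli's inequality.\<close>
lemma stated_factor_ge:
  fixes b \<alpha> C G :: real and n :: nat
  assumes n: "n \<ge> 2" and b0: "0 < b" and b1: "b \<le> 1" and a0: "0 < \<alpha>" and a1: "\<alpha> < 1"
    and C: "real n / b\<^sup>2 \<le> C" and G: "0 < G"
  shows "real n ^ 2 * G / (2 * b ^ 3) \<le>
    ((2 + sqrt 2) / (b\<^sup>2 * (1 - \<alpha>)) * ((real n - real n * C - 1 + C ^ n) / (1 - C)) * sqrt (real n)
      + (1 - C ^ n) / (2 * b * sqrt (1 / sqrt (real n) * (1 - \<alpha>)))) * (real n * G / (1 - C))"
proof -
  define D where "D = real n"
  define X where "X = sqrt (1 / sqrt D * (1 - \<alpha>))"
  define F where "F = D * G / (1 - C)"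
  have D2: "D \<ge> 2" using n by (simp add: D_def)
  have "D / 1 \<le> D / b\<^sup>2" using b0 b1 D2 power_le_one[of b 2] by (intro divide_left_mono) auto
  then have C1: "C > 1" using C D2 unfolding D_def[symmetric] by simp
  have sD: "sqrt D \<ge> 1" using D2 by simp
  have X0: "0 < X" using a1 sD by (simp add: X_def)
  have "1 / sqrt D * (1 - \<alpha>) \<le> 1 * 1" using sD a0 a1 by (intro mult_mono) auto
  then have X1: "X \<le> 1" by (simp add: X_def)
  have F0: "F < 0" using C1 D2 G by (simp add: F_def divide_pos_neg)
  have "1 + real n * (C - 1) \<le> (1 + (C - 1)) ^ n"
    by (rule Bernoulli_inequality) (use C1 in simp)
  then have "(D - D * C - 1 + C ^ n) / (1 - C) \<le> 0"
    using C1 by (simp add: D_def algebra_simps divide_nonneg_neg)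
  then have "(2 + sqrt 2) / (b\<^sup>2 * (1 - \<alpha>)) * ((D - D * C - 1 + C ^ n) / (1 - C)) \<le> 0"
    using a1 by (intro mult_nonneg_nonpos) auto
  then have "(2 + sqrt 2) / (b\<^sup>2 * (1 - \<alpha>)) * ((D - D * C - 1 + C ^ n) / (1 - C)) * sqrt D \<le> 0"
    by (rule mult_nonpos_nonneg) (use D2 in simp)
  then have T1: "0 \<le> (2 + sqrt 2) / (b\<^sup>2 * (1 - \<alpha>)) * ((D - D * C - 1 + C ^ n) / (1 - C)) * sqrt D * F"
    using F0 by (intro mult_nonpos_nonpos) auto
  have "C * (C - 1) \<le> C ^ n - 1"
    using C1 n power_increasing[of 2 n C] by (simp add: power2_eq_square algebra_simps)
  then have "C \<le> (C ^ n - 1) / (C - 1)" using C1 by (simp add: pos_le_divide_eq)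
  moreover have "D * G / (2 * b) \<le> D * G / (2 * b * X)"
    using X0 X1 b0 D2 G by (intro divide_left_mono) auto
  ultimately have "C * (D * G / (2 * b)) \<le> ((C ^ n - 1) / (C - 1)) * (D * G / (2 * b * X))"
    using C1 D2 G b0 by (intro mult_mono) auto
  moreover have "(D / b\<^sup>2) * (D * G / (2 * b)) \<le> C * (D * G / (2 * b))"
    using C D2 G b0 unfolding D_def[symmetric] by (intro mult_right_mono) auto
  moreover have "((C ^ n - 1) / (C - 1)) * (D * G / (2 * b * X)) = (1 - C ^ n) / (2 * b * X) * F"
    unfolding F_def using C1 b0 X0 by (simp add: field_simps)
  moreover have "(D / b\<^sup>2) * (D * G / (2 * b)) = D ^ 2 * G / (2 * b ^ 3)"
    using b0 by (simp add: field_simps power2_eq_square power3_eq_cube)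
  ultimately show ?thesis using T1 unfolding F_def[symmetric] X_def[symmetric] D_def[symmetric]
    by (simp add: distrib_right)
qed

lemma reconstruction_bound_le_stated_bound:
  fixes \<alpha> e P :: real
  assumes d: "d \<ge> 2" and a0: "0 < \<alpha>" and a1: "\<alpha> < 1" and P: "0 < P" and e: "0 \<le> e"
  defines "C \<equiv> ((1 + sqrt 2) * real (2*d - 1) * e + real d * P\<^sup>2) / ((beta d * P)\<^sup>2 * (1 - \<alpha>))"
  shows "sqrt (real d) * ((e / P) * (real (2*d-1) / beta d
           + real d * (real d - 1) * real (2*d-1) * (real (2*d-1) + 2) / (beta d)\<^sup>2))
    \<le> ((2 + sqrt 2) / ((beta d)\<^sup>2 * (1 - \<alpha>)) * ((real d - real d * C - 1 + C ^ d) / (1 - C)) * sqrt (real d)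
        + (1 - C ^ d) / (2 * beta d * sqrt (1 / sqrt (real d) * (1 - \<alpha>))))
       * (real d * real (2*d - 1) / (1 - C)) * (e / P)"
proof -
  define b where "b = beta d"
  define G where "G = real (2*d - 1)"
  have b0: "0 < b" using beta_pos[OF d] by (simp add: b_def)
  have bs: "b \<le> 1 / (2 * real d * G)"
    using beta_le_inverse_grid[OF d] d by (simp add: b_def G_def mult.assoc)
  have "2 * 3 \<le> real d * G" using d by (intro mult_mono) (auto simp: G_def of_nat_diff)
  then have "1 / (2 * real d * G) \<le> 1" by (simp add: field_simps)
  then have b1: "b \<le> 1" using bs by linarith
  have "real d / b\<^sup>2 = real d * P\<^sup>2 / ((b * P)\<^sup>2 * 1)" using P by (simp add: power_mult_distrib)
  also have "\<dots> \<le> real d * P\<^sup>2 / ((b * P)\<^sup>2 * (1 - \<alpha>))"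
    using a0 a1 b0 P by (intro divide_left_mono mult_left_mono) auto
  also have "\<dots> \<le> C" unfolding C_def b_def[symmetric]
    using b0 P a1 e d by (intro divide_right_mono) auto
  finally have "real d / b\<^sup>2 \<le> C" .
  then have factor: "real d ^ 2 * G / (2 * b ^ 3) \<le>
      ((2 + sqrt 2) / (b\<^sup>2 * (1 - \<alpha>)) * ((real d - real d * C - 1 + C ^ d) / (1 - C)) * sqrt (real d)
        + (1 - C ^ d) / (2 * b * sqrt (1 / sqrt (real d) * (1 - \<alpha>)))) * (real d * G / (1 - C))"
    using stated_factor_ge[OF d b0 b1 a0 a1] d by (simp add: G_def)
  have eP: "0 \<le> e / P" using e P by simp
  have "sqrt (real d) * ((e / P) * (G / b + real d * (real d - 1) * G * (G + 2) / b\<^sup>2))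
      = (e / P) * (sqrt (real d) * (G / b + real d * (real d - 1) * G * (G + 2) / b\<^sup>2))" by simp
  also have "\<dots> \<le> (e / P) * (real d ^ 2 * G / (2 * b ^ 3))"
    using d b0 bs eP by (intro mult_left_mono reconstruction_factor_le) (auto simp: G_def of_nat_diff)
  also have "\<dots> \<le> (e / P) * (((2 + sqrt 2) / (b\<^sup>2 * (1 - \<alpha>)) * ((real d - real d * C - 1 + C ^ d) / (1 - C)) * sqrt (real d)
        + (1 - C ^ d) / (2 * b * sqrt (1 / sqrt (real d) * (1 - \<alpha>)))) * (real d * G / (1 - C)))"
    using factor eP by (rule mult_left_mono)
  finally show ?thesis unfolding b_def G_def by (simp only: mult.commute[of "e / P"] mult.assoc)
qed


lemma noisy_meas_error:
  assumes "l \<in> {1..6*d-3}"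
  shows "\<bar>noisy_meas d p eps l - meas d p l\<bar> \<le> sup_norm d eps"
  using assms by (simp add: noisy_meas_def sup_norm_def)

theorem mainTheorem1:
  fixes d :: nat and \<alpha> :: real
  assumes "d \<ge> 2" and "0 < \<alpha>" and "\<alpha> < 1"
  shows "\<exists>R :: (nat \<Rightarrow> real) \<Rightarrow> complex poly. (\<forall>x. R x \<in> Pd d) \<and>
    (\<forall>p eps. p \<in> Pd d \<longrightarrow> p \<noteq> 0 \<longrightarrow>
       sup_norm d eps \<le> \<alpha> * (beta d * pnorm p)\<^sup>2 / real (2*d - 1) \<longrightarrow>
       (let pt = R (noisy_meas d p eps);
            e = sup_norm d eps;
            b = beta d;
            C = ((1 + sqrt 2) * real (2*d - 1) * e + real d * (pnorm p)\<^sup>2)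
                / ((b * pnorm p)\<^sup>2 * (1 - \<alpha>))
        in rho p pt \<le>
           ((2 + sqrt 2) / (b\<^sup>2 * (1 - \<alpha>)) * ((real d - real d * C - 1 + C ^ d) / (1 - C)) * sqrt (real d)
            + (1 - C ^ d) / (2 * b * sqrt (1 / sqrt (real d) * (1 - \<alpha>))))
           * (real d * real (2*d - 1) / (1 - C)) * (e / pnorm p)))"
  apply (intro exI[of _ "reconstruct d"] conjI allI impI)
   apply (use degree_reconstruct assms(1) in \<open>simp add: Pd_def\<close>)
  subgoal premises prems for p eps
  proof -
    have "real (2*d - 1) * sup_norm d eps \<le> \<alpha> * (beta d * pnorm p)\<^sup>2"
      using prems(3) assms(1) by (simp add: pos_le_divide_eq mult.commute)
    also have "\<dots> \<le> 1 * (beta d * pnorm p)\<^sup>2" using assms(3) by (intro mult_right_mono) auto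
    finally have "real (2*d - 1) * sup_norm d eps \<le> (beta d * pnorm p)\<^sup>2" by simp
    then interpret noisy_measurements d p "noisy_meas d p eps" "sup_norm d eps"
      using assms(1) prems(1,2) noisy_meas_error by unfold_locales (auto simp: Pd_def)
    show ?thesis
      unfolding Let_def using assms pnorm_pos[OF prems(2)] error_nonneg
      by (intro order_trans[OF reconstruction_error reconstruction_bound_le_stated_bound])
  qed
  done

end
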